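(* Let $\overline{\mathcal G_H}=\mathbb S^1_\beta\times[-\infty,\infty]_a$ with the smooth structure described in the context, let $\mu_H(\beta,a)=(1+a^2)^{-1/2}$ (extended by $0$ at $a=\pm\infty$), and let $\mathcal S_A^H(\beta,a)=(\beta+\pi+2\tan^{-1}a,\,-a)$. A function $h$ on $\overline{\mathcal G_H}$ belongs to $C^\infty_{\alpha,+}(\overline{\mathcal G_H})$ if and only if $h\in C^\infty(\overline{\mathcal G_H})$, $h=h\circ\mathcal S_A^H$, and, when $h$ is expressed in terms of the coordinates $(\beta+\tan^{-1}a,\ \mu_H)$ near $\partial\overline{\mathcal G_H}=\{a=\pm\infty\}$, all odd-order terms of the Taylor expansion of $h$ off of $\partial\overline{\mathcal G_H}$ (in the variable $\mu_H$) vanish.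
   Context: $\overline{\mathcal G_H}=\mathbb S^1_\beta\times[-\infty,\infty]_a$ is given the smooth structure of a compact manifold with boundary for which the map $\Psi_{hf}(\beta,a)=(\beta,\tan^{-1}a)$ (with $\tan^{-1}(\pm\infty)=\pm\pi/2$) is a diffeomorphism onto $\partial_+S\mathbb D_E:=\mathbb S^1_\beta\times[-\pi/2,\pi/2]_\alpha$; then $\mu_H$ is a smooth boundary defining function. Fan-beam coordinates on the boundary $\partial S\mathbb D_E$ of the unit tangent bundle of the Euclidean unit disk: $(\beta,\alpha)\in\mathbb S^1\times(\mathbb R/2\pi\mathbb Z)$ denotes the unit vector at $e^{i\beta}$ with direction $e^{i(\beta+\pi+\alpha)}$; $\partial_+S\mathbb D_E$ corresponds to $\alpha\in[-\pi/2,\pi/2]$ (inward pointing), $\partial_-S\mathbb D_E$ to $\alpha\in[\pi/2,3\pi/2]$. The scattering relation is $\mathcal S^E(\beta,\alpha)=(\beta+\pi+2\alpha,\pi-\alpha)$, and $\mathcal S^E_A(\beta,\alpha)=(\beta+\pi+2\alpha,-\alpha)$. For $u$ on $\partial_+S\mathbb D_E$, $A_+u$ is the function on $\partial S\mathbb D_E$ equal to $u$ on $\partial_+S\mathbb D_E$ and to $u\circ\mathcal S^E$ on $\partial_-S\mathbb D_E$. Define $C^\infty_\alpha(\partial_+S\mathbb D_E)=\{u\in C^\infty(\partial_+S\mathbb D_E): A_+u\in C^\infty(\partial S\mathbb D_E)\}$, $C^\infty_{\alpha,+}(\partial_+S\mathbb D_E)=\{u\in C^\infty_\alpha(\partial_+S\mathbb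 D_E): u\circ\mathcal S^E_A=u\}$, and $C^\infty_{\alpha,+}(\overline{\mathcal G_H}):=\Psi_{hf}^*C^\infty_{\alpha,+}(\partial_+S\mathbb D_E)=\{u\circ\Psi_{hf}\}$. *)

theory Defs
  imports "HOL-Analysis.Analysis"
begin

(* Functions on S^1_beta x (...) are represented by functions of a real variable beta
   that are 2pi-periodic in beta.  Values are complex (covers the real-valued case). *)

fun Ck2 :: "nat \<Rightarrow> (real \<times> real \<Rightarrow> complex) \<Rightarrow> bool" where
  "Ck2 0 f = continuous_on UNIV f"
| "Ck2 (Suc n) f = (\<exists>D1 D2. (\<forall>x. (f has_derivative (\<lambda>v. fst v *\<^sub>R D1 x + snd v *\<^sub>R D2 x)) (at x))
                            \<and> Ck2 n D1 \<and> Ck2 n D2)"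

definition smooth2 :: "(real \<times> real \<Rightarrow> complex) \<Rightarrow> bool" where
  "smooth2 f \<longleftrightarrow> (\<forall>n. Ck2 n f)"

fun atan_e :: "ereal \<Rightarrow> real" where
  "atan_e (ereal r) = arctan r"
| "atan_e PInfty = pi / 2"
| "atan_e MInfty = - (pi / 2)"

fun mu_H :: "ereal \<Rightarrow> real" where
  "mu_H (ereal a) = 1 / sqrt (1 + a\<^sup>2)"
| "mu_H PInfty = 0"
| "mu_H MInfty = 0"

(* closed fibre interval of the incoming boundary \<partial>_+ S D_E *)
definition Iplus :: "real set" where
  "Iplus = {- (pi / 2) .. pi / 2}"

(* C^infty(\<partial>_+ S D_E): u(beta, alpha), alpha in [-pi/2, pi/2], 2pi-periodic in beta,
   smooth up to the boundary (= restriction of a smooth function on R^2) *)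
definition Cinf_plus :: "(real \<Rightarrow> real \<Rightarrow> complex) \<Rightarrow> bool" where
  "Cinf_plus u \<longleftrightarrow> (\<forall>\<beta> \<alpha>. \<alpha> \<in> Iplus \<longrightarrow> u (\<beta> + 2 * pi) \<alpha> = u \<beta> \<alpha>)
     \<and> (\<exists>F. smooth2 F \<and> (\<forall>\<beta> \<alpha>. \<alpha> \<in> Iplus \<longrightarrow> F (\<beta>, \<alpha>) = u \<beta> \<alpha>))"

(* C^infty(\<partial> S D_E) = smooth functions on the torus (2pi-periodic in both variables) *)
definition Cinf_torus :: "(real \<Rightarrow> real \<Rightarrow> complex) \<Rightarrow> bool" where
  "Cinf_torus w \<longleftrightarrow> (\<forall>\<beta> \<alpha>. w (\<beta> + 2 * pi) \<alpha> = w \<beta> \<alpha> \<and> w \<beta> (\<alpha> + 2 * pi) = w \<beta> \<alpha>)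
     \<and> (\<exists>F. smooth2 F \<and> (\<forall>\<beta> \<alpha>. F (\<beta>, \<alpha>) = w \<beta> \<alpha>))"

definition alpha_rep :: "real \<Rightarrow> real" where
  "alpha_rep \<alpha> = \<alpha> - 2 * pi * of_int \<lfloor>(\<alpha> + pi / 2) / (2 * pi)\<rfloor>"

definition SE :: "real \<times> real \<Rightarrow> real \<times> real" where
  "SE p = (fst p + pi + 2 * snd p, pi - snd p)"

definition SEA :: "real \<times> real \<Rightarrow> real \<times> real" where
  "SEA p = (fst p + pi + 2 * snd p, - snd p)"

definition A_plus :: "(real \<Rightarrow> real \<Rightarrow> complex) \<Rightarrow> real \<Rightarrow> real \<Rightarrow> complex" where
  "A_plus u \<beta> \<alpha> = (let \<alpha>' = alpha_rep \<alpha> in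
      if \<alpha>' \<le> pi / 2 then u \<beta> \<alpha>' else case_prod u (SE (\<beta>, \<alpha>')))"

definition Cinf_alpha :: "(real \<Rightarrow> real \<Rightarrow> complex) \<Rightarrow> bool" where
  "Cinf_alpha u \<longleftrightarrow> Cinf_plus u \<and> Cinf_torus (A_plus u)"

definition Cinf_alpha_plus :: "(real \<Rightarrow> real \<Rightarrow> complex) \<Rightarrow> bool" where
  "Cinf_alpha_plus u \<longleftrightarrow> Cinf_alpha u \<and> (\<forall>\<beta> \<alpha>. \<alpha> \<in> Iplus \<longrightarrow> case_prod u (SEA (\<beta>, \<alpha>)) = u \<beta> \<alpha>)"

definition Psi_hf :: "real \<times> ereal \<Rightarrow> real \<times> real" where
  "Psi_hf p = (fst p, atan_e (snd p))"

(* functions on bar G_H: h(beta, a), beta real (2pi-periodic), a in [-infty, infty] *)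
definition Cinf_GH :: "(real \<Rightarrow> ereal \<Rightarrow> complex) \<Rightarrow> bool" where
  "Cinf_GH h \<longleftrightarrow> (\<exists>u. Cinf_plus u \<and> (\<forall>\<beta> a. h \<beta> a = case_prod u (Psi_hf (\<beta>, a))))"

definition Cinf_alpha_plus_GH :: "(real \<Rightarrow> ereal \<Rightarrow> complex) \<Rightarrow> bool" where
  "Cinf_alpha_plus_GH h \<longleftrightarrow> (\<exists>u. Cinf_alpha_plus u \<and> (\<forall>\<beta> a. h \<beta> a = case_prod u (Psi_hf (\<beta>, a))))"

definition SAH :: "real \<times> ereal \<Rightarrow> real \<times> ereal" where
  "SAH p = (fst p + pi + 2 * atan_e (snd p), - snd p)"

(* h expressed in the coordinates (theta, mu) = (beta + tan^{-1} a, mu_H) near the boundary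
   component a = +infty (pos) resp. a = -infty (neg): the point with coordinates (theta, mu)
   is (theta - tan^{-1} a, a), where a is the unique a > 0 (resp. a < 0) with mu_H a = mu *)
definition h_coord_pos :: "(real \<Rightarrow> ereal \<Rightarrow> complex) \<Rightarrow> real \<Rightarrow> real \<Rightarrow> complex" where
  "h_coord_pos h \<theta> \<mu> = (let a = (THE a. a > 0 \<and> mu_H a = \<mu>) in h (\<theta> - atan_e a) a)"

definition h_coord_neg :: "(real \<Rightarrow> ereal \<Rightarrow> complex) \<Rightarrow> real \<Rightarrow> real \<Rightarrow> complex" where
  "h_coord_neg h \<theta> \<mu> = (let a = (THE a. a < 0 \<and> mu_H a = \<mu>) in h (\<theta> - atan_e a) a)"

definition odd_taylor_vanish :: "(real \<Rightarrow> real \<Rightarrow> complex) \<Rightarrow> bool" where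
  "odd_taylor_vanish H \<longleftrightarrow> (\<forall>\<theta> N. \<exists>c :: nat \<Rightarrow> complex.
      (\<forall>j\<le>N. odd j \<longrightarrow> c j = 0) \<and>
      ((\<lambda>\<mu>. norm (H \<theta> \<mu> - (\<Sum>j\<le>N. c j * of_real \<mu> ^ j)) / \<mu> ^ N) \<longlongrightarrow> 0) (at_right 0))"

end

theory Submission
  imports Defs
begin

(*
  Write h (beta, a) = u (beta, arctan a).  The symmetry h = h o S_A^H is the symmetry u = u o S_A^E,
  so the content of the theorem is that A_+ u is smooth on the torus exactly when the expansions
  of h in mu_H have no odd terms.

  Near the seams alpha = pi/2 and alpha = -pi/2, A_+ u is u on one side and u o S^E on the other,
  and S^E reflects every line beta + alpha = theta across the seam.  In the coordinates
  (theta, mu_H) this line is parametrized by alpha = +-(pi/2 - arcsin mu_H), so h is w o arcsin,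
  where w is the restriction of (a smooth extension of) u to the line, centred at the seam.
  If A_+ u is smooth, w is even near 0, hence so is the smooth function w o arcsin, and its
  Taylor expansion has only even terms.  Conversely, if the expansion has only even terms, the
  odd part of w is phi o sin with phi flat at 0, so all odd derivatives of w vanish at the seam.
  Then u and u o S^E agree to infinite order along the seam, and two smooth functions agreeing
  to infinite order along a line glue to a smooth function.
*)

section \<open>Finitely differentiable functions of one real variable\<close>

fun Ck_on :: "real set \<Rightarrow> nat \<Rightarrow> (real \<Rightarrow> 'a::real_normed_vector) \<Rightarrow> bool" where
  "Ck_on S 0 f = continuous_on S f"
| "Ck_on S (Suc n) f = (\<exists>f'. (\<forall>x\<in>S. (f has_vector_derivative f' x) (at x)) \<and> Ck_on S n f')"

lemma Ck_on_SucD: "Ck_on S (Suc n) f \<Longrightarrow> Ck_on S n f"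
proof (induction n arbitrary: f)
  case 0
  then obtain f' where "\<forall>x\<in>S. (f has_vector_derivative f' x) (at x)" by auto
  then show ?case
    by (auto intro!: continuous_at_imp_continuous_on has_vector_derivative_continuous)
next
  case (Suc n)
  then show ?case by auto
qed

lemma Ck_on_const: "Ck_on S n (\<lambda>x. c)"
  by (induction n arbitrary: c) (auto intro!: exI[of _ "\<lambda>x. 0"] derivative_eq_intros)

lemma Ck_on_ident: "Ck_on S n (\<lambda>x. x)"
  by (cases n) (auto intro!: exI[of _ "\<lambda>x. 1"] derivative_eq_intros Ck_on_const continuous_on_id)

lemma Ck_on_add: "Ck_on S n f \<Longrightarrow> Ck_on S n g \<Longrightarrow> Ck_on S n (\<lambda>x. f x + g x)"
proof (induction n arbitrary: f g)
  case (Suc n)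
  then obtain f' g' where "\<forall>x\<in>S. (f has_vector_derivative f' x) (at x)" "Ck_on S n f'"
    "\<forall>x\<in>S. (g has_vector_derivative g' x) (at x)" "Ck_on S n g'" by auto
  with Suc.IH show ?case
    by (auto intro!: exI[of _ "\<lambda>x. f' x + g' x"] has_vector_derivative_add)
qed (auto intro: continuous_on_add)

lemma Ck_on_minus: "Ck_on S n f \<Longrightarrow> Ck_on S n (\<lambda>x. - f x)"
proof (induction n arbitrary: f)
  case (Suc n)
  then obtain f' where "\<forall>x\<in>S. (f has_vector_derivative f' x) (at x)" "Ck_on S n f'" by auto
  with Suc.IH show ?case
    by (auto intro!: exI[of _ "\<lambda>x. - f' x"] has_vector_derivative_minus)
qed (auto intro: continuous_on_minus)

lemma Ck_on_diff: "Ck_on S n f \<Longrightarrow> Ck_on S n g \<Longrightarrow> Ck_on S n (\<lambda>x. f x - g x)"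
  using Ck_on_add[of S n f "\<lambda>x. - g x"] Ck_on_minus[of S n g] by simp

lemma Ck_on_scaleR:
  fixes f :: "real \<Rightarrow> 'a::real_normed_vector"
  shows "Ck_on S n g \<Longrightarrow> Ck_on S n f \<Longrightarrow> Ck_on S n (\<lambda>x. g x *\<^sub>R f x)"
proof (induction n arbitrary: f g)
  case (Suc n)
  then obtain f' g' where f': "\<forall>x\<in>S. (f has_vector_derivative f' x) (at x)" "Ck_on S n f'"
    and g': "\<forall>x\<in>S. (g has_vector_derivative g' x) (at x)" "Ck_on S n g'" by auto
  have "Ck_on S n f" "Ck_on S n g" using Suc.prems Ck_on_SucD by blast+
  with Suc.IH f' g' have "Ck_on S n (\<lambda>x. g x *\<^sub>R f' x + g' x *\<^sub>R f x)"
    by (auto intro!: Ck_on_add)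
  moreover have "\<forall>x\<in>S. ((\<lambda>x. g x *\<^sub>R f x) has_vector_derivative g x *\<^sub>R f' x + g' x *\<^sub>R f x) (at x)"
    using f' g' by (auto intro!: has_vector_derivative_scaleR
        simp: has_real_derivative_iff_has_vector_derivative)
  ultimately show ?case by auto
qed (auto intro: continuous_on_scaleR)

lemma Ck_on_mult:
  fixes f g :: "real \<Rightarrow> real"
  shows "Ck_on S n g \<Longrightarrow> Ck_on S n f \<Longrightarrow> Ck_on S n (\<lambda>x. g x * f x)"
  using Ck_on_scaleR[of S n g f] by simp

lemma Ck_on_compose:
  fixes f :: "real \<Rightarrow> 'a::real_normed_vector" and g :: "real \<Rightarrow> real"
  shows "Ck_on T n f \<Longrightarrow> Ck_on S n g \<Longrightarrow> g ` S \<subseteq> T \<Longrightarrow> Ck_on S n (\<lambda>x. f (g x))"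
proof (induction n arbitrary: f g)
  case 0
  then show ?case using continuous_on_compose2[of T f S g] by auto
next
  case (Suc n)
  then obtain f' g' where f': "\<forall>x\<in>T. (f has_vector_derivative f' x) (at x)" "Ck_on T n f'"
    and g': "\<forall>x\<in>S. (g has_vector_derivative g' x) (at x)" "Ck_on S n g'" by auto
  have "Ck_on S n g" using Suc.prems Ck_on_SucD by blast
  with Suc.IH[of f' g] Suc.prems(3) f' g' have "Ck_on S n (\<lambda>x. g' x *\<^sub>R f' (g x))"
    by (auto intro!: Ck_on_scaleR)
  moreover have "\<forall>x\<in>S. ((\<lambda>x. f (g x)) has_vector_derivative g' x *\<^sub>R f' (g x)) (at x)"
    using f' g' Suc.prems(3) vector_diff_chain_at[of g "g' _" _ f "f' (g _)"]
    by (auto simp: o_def has_real_derivative_iff_has_vector_derivative)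
  ultimately show ?case by auto
qed

lemma Ck_on_inverse: "Ck_on {0<..} n (inverse :: real \<Rightarrow> real)"
proof (induction n)
  case (Suc n)
  have "\<forall>x\<in>{0<..}. (inverse has_vector_derivative - (inverse x * inverse x)) (at x)"
  proof
    fix x :: real assume "x \<in> {0<..}"
    then show "(inverse has_vector_derivative - (inverse x * inverse x)) (at x)"
      using DERIV_inverse[of x UNIV]
      by (simp add: has_real_derivative_iff_has_vector_derivative[symmetric])
  qed
  moreover have "Ck_on {0<..} n (\<lambda>x::real. - (inverse x * inverse x))"
    using Suc.IH by (auto intro!: Ck_on_minus Ck_on_mult)
  ultimately show ?case by auto
qed (auto intro!: continuous_intros)

lemma Ck_on_sqrt: "Ck_on {0<..} n sqrt"
proof (induction n)
  case (Suc n)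
  have "\<forall>x\<in>{0<..}. (sqrt has_vector_derivative 1/2 * inverse (sqrt x)) (at x)"
    using DERIV_real_sqrt by (auto simp: has_real_derivative_iff_has_vector_derivative[symmetric])
  moreover have "Ck_on {0<..} n (\<lambda>x::real. 1/2 * inverse (sqrt x))"
    by (rule Ck_on_mult[OF Ck_on_const Ck_on_compose[OF Ck_on_inverse Suc.IH]]) auto
  ultimately show ?case by auto
qed (auto intro!: continuous_intros)

lemma Ck_on_arcsin: "Ck_on {-1<..<1} n arcsin"
proof -
  have pos: "0 < 1 - x * x" if "x \<in> {-1<..<1}" for x :: real
    using that abs_square_less_1[of x] by (auto simp: power2_eq_square)
  have "\<forall>x\<in>{-1<..<1}. (arcsin has_vector_derivative inverse (sqrt (1 - x * x))) (at x)"
    using DERIV_arcsin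
    by (auto simp: has_real_derivative_iff_has_vector_derivative[symmetric] power2_eq_square)
  moreover have "Ck_on {-1<..<1} n (\<lambda>x::real. inverse (sqrt (1 - x * x)))"
    using pos by (intro Ck_on_compose[OF Ck_on_inverse] Ck_on_compose[OF Ck_on_sqrt]
        Ck_on_diff Ck_on_const Ck_on_mult Ck_on_ident) auto
  ultimately have "Ck_on {-1<..<1} (Suc n) arcsin" by auto
  then show ?thesis by (rule Ck_on_SucD)
qed

lemma Ck_on_cong: "open S \<Longrightarrow> (\<And>x. x \<in> S \<Longrightarrow> f x = g x) \<Longrightarrow> Ck_on S n f \<Longrightarrow> Ck_on S n g"
proof (induction n arbitrary: f g)
  case 0
  then show ?case using continuous_on_cong by (metis Ck_on.simps(1))
next
  case (Suc n)
  then obtain f' where "\<forall>x\<in>S. (f has_vector_derivative f' x) (at x)" "Ck_on S n f'" by auto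
  with Suc.prems show ?case
    by (metis Ck_on.simps(2) has_vector_derivative_transform_within_open)
qed

definition deriv_chain :: "real set \<Rightarrow> (nat \<Rightarrow> real \<Rightarrow> 'a::real_normed_vector) \<Rightarrow> bool" where
  "deriv_chain S d \<longleftrightarrow> (\<forall>k. \<forall>x\<in>S. (d k has_vector_derivative d (Suc k) x) (at x))"

lemma deriv_chain_isCont: "deriv_chain S d \<Longrightarrow> x \<in> S \<Longrightarrow> isCont (d k) x"
  unfolding deriv_chain_def using has_vector_derivative_continuous by blast

lemma deriv_chain_Ck_on: "deriv_chain S d \<Longrightarrow> Ck_on S n (d k)"
proof (induction n arbitrary: k)
  case 0
  then show ?case by (auto intro!: continuous_at_imp_continuous_on deriv_chain_isCont)
next
  case (Suc n)
  then show ?case unfolding deriv_chain_def by auto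
qed

lemma Ck_on_imp_deriv_chain:
  assumes S: "open S" and f: "\<And>n. Ck_on S n f"
  obtains d where "d 0 = f" "deriv_chain S d"
proof -
  define D where "D g x = vector_derivative g (at x)" for g :: "real \<Rightarrow> 'a" and x
  have D: "Ck_on S n (D g) \<and> (\<forall>x\<in>S. (g has_vector_derivative D g x) (at x))"
    if "Ck_on S (Suc n) g" for g n
  proof -
    from that obtain g' where g': "\<forall>x\<in>S. (g has_vector_derivative g' x) (at x)" "Ck_on S n g'"
      by auto
    then have "\<forall>x\<in>S. D g x = g' x" unfolding D_def using vector_derivative_at by blast
    with g' S show ?thesis using Ck_on_cong[OF S, of g' "D g"] by auto
  qed
  have Ck: "Ck_on S n ((D ^^ k) f)" for k n
  proof (induction k arbitrary: n)
    case (Suc k)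
    show ?case using D[OF Suc.IH[of "Suc n"]] by simp
  qed (simp add: f)
  show thesis
  proof
    show "deriv_chain S (\<lambda>k. (D ^^ k) f)"
      unfolding deriv_chain_def using D[OF Ck[of "Suc 0"]] by simp
  qed simp
qed

lemma deriv_chain_arcsin:
  assumes "deriv_chain UNIV w"
  obtains d where "d 0 = (\<lambda>\<mu>. w 0 (arcsin \<mu>))" "deriv_chain {-1<..<1} d"
  using Ck_on_imp_deriv_chain[OF open_greaterThanLessThan, of _ _ "\<lambda>\<mu>. w 0 (arcsin \<mu>)"]
    Ck_on_compose[OF deriv_chain_Ck_on[OF assms] Ck_on_arcsin] by blast

lemma deriv_chain_diff: "deriv_chain S d \<Longrightarrow> deriv_chain S e \<Longrightarrow> deriv_chain S (\<lambda>k t. d k t - e k t)"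
  unfolding deriv_chain_def by (auto intro: has_vector_derivative_diff)

lemma deriv_chain_reflect:
  assumes "deriv_chain S d"
  shows "deriv_chain (uminus ` S) (\<lambda>k t. (-1) ^ k *\<^sub>R d k (- t))"
  unfolding deriv_chain_def
proof (intro allI ballI)
  fix k and t :: real
  assume "t \<in> uminus ` S"
  then have "(d k has_vector_derivative d (Suc k) (- t)) (at (- t))"
    using assms unfolding deriv_chain_def by auto
  moreover have "(uminus has_vector_derivative -1) (at t)"
    using has_vector_derivative_minus[OF has_vector_derivative_id[of "at t"]] by simp
  ultimately have "((\<lambda>t. d k (- t)) has_vector_derivative - d (Suc k) (- t)) (at t)"
    using vector_diff_chain_at[of uminus "-1" t "d k"] by (simp add: o_def)
  then show "((\<lambda>t. (-1) ^ k *\<^sub>R d k (- t)) has_vector_derivative (-1) ^ Suc k *\<^sub>R d (Suc k) (- t)) (at t)"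
    using has_vector_derivative_scaleR[OF DERIV_const[of "(-1) ^ k"]] by fastforce
qed

lemma deriv_chain_vanishes:
  assumes d: "deriv_chain S d" and T: "open T" "T \<subseteq> S" and zero: "\<And>x. x \<in> T \<Longrightarrow> d 0 x = 0"
    and x: "x \<in> S" "x \<in> closure T"
  shows "d k x = 0"
proof -
  have zero_k: "\<forall>y\<in>T. d k y = 0" for k
  proof (induction k)
    case (Suc k)
    show ?case
    proof
      fix y assume "y \<in> T"
      with d T have "(d k has_vector_derivative d (Suc k) y) (at y)"
        unfolding deriv_chain_def by auto
      with Suc.IH T \<open>y \<in> T\<close> have "((\<lambda>y. 0) has_vector_derivative d (Suc k) y) (at y)"
        using has_vector_derivative_transform_within_open[of "d k" _ y T "\<lambda>y. 0"] by auto
      then show "d (Suc k) y = 0"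
        using vector_derivative_unique_at has_vector_derivative_const by metis
    qed
  qed (use zero in auto)
  obtain ys where ys: "\<forall>n. ys n \<in> T" "ys \<longlonglongrightarrow> x"
    using x(2) closure_sequential by blast
  have "(\<lambda>n. d k (ys n)) \<longlonglongrightarrow> d k x"
    using ys(2) isCont_tendsto_compose[OF deriv_chain_isCont[OF d x(1)]] by blast
  moreover have "(\<lambda>n. d k (ys n)) = (\<lambda>n. 0)" using zero_k ys(1) by auto
  ultimately show ?thesis using LIMSEQ_unique tendsto_const by metis
qed

lemma deriv_chain_minus_reflect:
  assumes "deriv_chain S d" "uminus ` S = S"
  shows "deriv_chain S (\<lambda>k x. d k x - (-1) ^ k *\<^sub>R d k (- x))"
proof -
  have "deriv_chain S (\<lambda>k x. (-1) ^ k *\<^sub>R d k (- x))"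
    using deriv_chain_reflect[OF assms(1)] assms(2) by simp
  from deriv_chain_diff[OF assms(1) this] show ?thesis .
qed

lemma deriv_chain_even_imp_odd_derivs_zero:
  fixes d :: "nat \<Rightarrow> real \<Rightarrow> 'a::real_normed_vector"
  assumes d: "deriv_chain S d" and S: "open S" "0 \<in> S" "uminus ` S = S"
    and even: "\<And>x. x \<in> S \<Longrightarrow> d 0 (- x) = d 0 x" and k: "odd k"
  shows "d k 0 = 0"
proof -
  have "d k 0 - (-1) ^ k *\<^sub>R d k (- 0) = 0"
    by (rule deriv_chain_vanishes[OF deriv_chain_minus_reflect[OF d S(3)] S(1) order_refl _ S(2)])
      (use even S closure_subset in auto)
  with k show ?thesis by (simp add: scaleR_2[symmetric])
qed

section \<open>Taylor expansions at 0\<close>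

lemma deriv_chain_taylor_remainder:
  fixes d :: "nat \<Rightarrow> real \<Rightarrow> 'a::banach"
  assumes d: "deriv_chain S d" and x: "0 < x" "{0..x} \<subseteq> S"
    and M: "\<And>t. t \<in> {0..x} \<Longrightarrow> norm (d (Suc N) t) \<le> M"
  shows "norm (d 0 x - (\<Sum>j\<le>N. (x ^ j / fact j) *\<^sub>R d j 0)) \<le> M / fact N * x * x ^ N"
proof -
  have "(d m has_vector_derivative d (Suc m) t) (at t within {0..x})" if "t \<in> {0..x}" for m t
    using d x that unfolding deriv_chain_def by (blast intro: has_vector_derivative_at_within)
  then have int: "((\<lambda>t. ((x - t) ^ N / fact N) *\<^sub>R d (Suc N) t) has_integral
      d 0 x - (\<Sum>j\<le>N. (x ^ j / fact j) *\<^sub>R d j 0)) (cbox 0 x)"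
    using Taylor_has_integral[of "Suc N" d "d 0" 0 x] x by (simp add: cbox_interval lessThan_Suc_atMost)
  have M0: "0 \<le> M" using order_trans[OF norm_ge_zero M[of 0]] x by simp
  have bound: "norm (((x - t) ^ N / fact N) *\<^sub>R d (Suc N) t) \<le> x ^ N / fact N * M"
    if t: "t \<in> cbox 0 x" for t
  proof -
    have "\<bar>x - t\<bar> ^ N * norm (d (Suc N) t) \<le> x ^ N * M"
      using t x M[of t] by (intro mult_mono power_mono) auto
    then show ?thesis by (simp add: power_abs divide_right_mono)
  qed
  have "norm (d 0 x - (\<Sum>j\<le>N. (x ^ j / fact j) *\<^sub>R d j 0)) \<le> x ^ N / fact N * M * measure lborel (cbox 0 x)"
    by (rule has_integral_bound[OF _ int bound]) (use x M0 in simp)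
  with x show ?thesis by (simp add: algebra_simps)
qed

lemma deriv_chain_taylor:
  fixes d :: "nat \<Rightarrow> real \<Rightarrow> 'a::banach"
  assumes d: "deriv_chain S d" and S: "open S" "0 \<in> S"
  shows "((\<lambda>x. norm (d 0 x - (\<Sum>j\<le>N. (x ^ j / fact j) *\<^sub>R d j 0)) / x ^ N) \<longlongrightarrow> 0) (at_right 0)"
proof -
  obtain r where r: "r > 0" "cball 0 r \<subseteq> S"
    using S open_contains_cball by blast
  then have sub: "{0..r} \<subseteq> S" by (auto simp: subset_iff)
  obtain M where M: "\<And>t. t \<in> {0..r} \<Longrightarrow> norm (d (Suc N) t) \<le> M"
    using continuous_on_compact_bound[of "{0..r}" "d (Suc N)"] sub
      deriv_chain_isCont[OF d] continuous_at_imp_continuous_on by (metis compact_Icc subsetD)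
  have remainder: "norm (d 0 x - (\<Sum>j\<le>N. (x ^ j / fact j) *\<^sub>R d j 0)) / x ^ N \<le> M / fact N * x"
    if x: "0 < x" "x \<le> r" for x
  proof -
    have "{0..x} \<subseteq> S" "\<And>t. t \<in> {0..x} \<Longrightarrow> norm (d (Suc N) t) \<le> M"
      using x sub M by auto
    from deriv_chain_taylor_remainder[OF d x(1) this] x show ?thesis by (simp add: divide_le_eq)
  qed
  show ?thesis
  proof (rule tendsto_sandwich[of "\<lambda>x. 0" _ _ "\<lambda>x. M / fact N * x"])
    show "\<forall>\<^sub>F x in at_right 0. 0 \<le> norm (d 0 x - (\<Sum>j\<le>N. (x ^ j / fact j) *\<^sub>R d j 0)) / x ^ N"
      by (rule eventually_at_rightI[of 0 r]) (use r in auto)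
    show "\<forall>\<^sub>F x in at_right 0.
        norm (d 0 x - (\<Sum>j\<le>N. (x ^ j / fact j) *\<^sub>R d j 0)) / x ^ N \<le> M / fact N * x"
      by (rule eventually_at_rightI[of 0 r]) (use r remainder in auto)
    show "((\<lambda>x. M / fact N * x) \<longlongrightarrow> 0) (at_right 0)"
      by (auto intro!: tendsto_eq_intros)
  qed simp
qed

lemma poly_coeffs_zero_if_little_o:
  fixes a :: "nat \<Rightarrow> 'a::real_normed_div_algebra"
  assumes "((\<lambda>x. norm (\<Sum>j\<le>N. a j * of_real x ^ j) / x ^ N) \<longlongrightarrow> 0) (at_right 0)"
  shows "\<forall>j\<le>N. a j = 0"
  using assms
proof (induction N arbitrary: a)
  case 0
  then have "((\<lambda>x. norm (a 0)) \<longlongrightarrow> 0) (at_right (0::real))" by simp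
  then show ?case
    using tendsto_const tendsto_unique trivial_limit_at_right_real by fastforce
next
  case (Suc N)
  define p where "p x = (\<Sum>j\<le>Suc N. a j * of_real x ^ j)" for x :: real
  have "((\<lambda>x. norm (p x) / x ^ Suc N * x ^ Suc N) \<longlongrightarrow> 0 * 0 ^ Suc N) (at_right 0)"
    using Suc.prems unfolding p_def by (intro tendsto_intros) auto
  moreover have "\<forall>\<^sub>F x in at_right 0. norm (p x) / x ^ Suc N * x ^ Suc N = norm (p x)"
    by (rule eventually_at_rightI[of 0 1]) auto
  ultimately have "((\<lambda>x. norm (p x)) \<longlongrightarrow> 0) (at_right 0)"
    using tendsto_cong by fastforce
  moreover have "(p \<longlongrightarrow> p 0) (at_right 0)"
    unfolding p_def by (intro tendsto_intros)
  ultimately have "p 0 = 0"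
    using tendsto_norm_zero_iff tendsto_unique trivial_limit_at_right_real by blast
  then have a0: "a 0 = 0"
    unfolding p_def by (simp add: sum.atMost_shift zero_power)
  have "\<forall>\<^sub>F x in at_right 0.
      norm (p x) / x ^ Suc N = norm (\<Sum>j\<le>N. a (Suc j) * of_real x ^ j) / x ^ N"
  proof (rule eventually_at_rightI[of 0 1])
    fix x :: real assume "x \<in> {0<..<1}"
    moreover have "p x = (\<Sum>j\<le>N. a (Suc j) * of_real x ^ j) * of_real x"
      unfolding p_def sum.atMost_Suc_shift using a0
      by (simp add: sum_distrib_right mult.assoc power_commutes)
    ultimately show "norm (p x) / x ^ Suc N = norm (\<Sum>j\<le>N. a (Suc j) * of_real x ^ j) / x ^ N"
      by (simp add: norm_mult)
  qed simp
  with Suc.prems have "((\<lambda>x. norm (\<Sum>j\<le>N. a (Suc j) * of_real x ^ j) / x ^ N) \<longlongrightarrow> 0) (at_right 0)"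
    unfolding p_def using tendsto_cong by fastforce
  from Suc.IH[OF this] a0 show ?case
    by (metis Suc_le_mono not0_implies_Suc)
qed

lemma scaleR_monomial:
  fixes v :: "'a::real_normed_field"
  shows "(x ^ j / fact j) *\<^sub>R v = v / of_real (fact j) * of_real x ^ j"
  by (simp add: scaleR_conv_of_real)

lemma deriv_chain_taylor_unique:
  fixes d :: "nat \<Rightarrow> real \<Rightarrow> 'a::{real_normed_field,banach}"
  assumes d: "deriv_chain S d" "open S" "0 \<in> S"
    and c: "((\<lambda>x. norm (d 0 x - (\<Sum>j\<le>N. c j * of_real x ^ j)) / x ^ N) \<longlongrightarrow> 0) (at_right 0)"
    and j: "j \<le> N"
  shows "d j 0 = of_real (fact j) * c j"
proof -
  define b where "b j = d j 0 / of_real (fact j)" for j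
  have taylor: "((\<lambda>x. norm (d 0 x - (\<Sum>j\<le>N. b j * of_real x ^ j)) / x ^ N) \<longlongrightarrow> 0) (at_right 0)"
    using deriv_chain_taylor[OF d, of N] by (simp add: b_def scaleR_monomial)
  have "((\<lambda>x. norm (\<Sum>j\<le>N. (b j - c j) * of_real x ^ j) / x ^ N) \<longlongrightarrow> 0) (at_right 0)"
  proof (rule tendsto_sandwich[OF _ _ tendsto_const tendsto_add_zero[OF c taylor]])
    show "\<forall>\<^sub>F x in at_right 0. 0 \<le> norm (\<Sum>j\<le>N. (b j - c j) * of_real x ^ j) / x ^ N"
      by (rule eventually_at_rightI[of 0 1]) auto
    show "\<forall>\<^sub>F x in at_right 0. norm (\<Sum>j\<le>N. (b j - c j) * of_real x ^ j) / x ^ N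
        \<le> norm (d 0 x - (\<Sum>j\<le>N. c j * of_real x ^ j)) / x ^ N
          + norm (d 0 x - (\<Sum>j\<le>N. b j * of_real x ^ j)) / x ^ N"
    proof (rule eventually_at_rightI[of 0 1])
      fix x :: real assume x: "x \<in> {0<..<1}"
      have "(\<Sum>j\<le>N. (b j - c j) * of_real x ^ j)
          = (d 0 x - (\<Sum>j\<le>N. c j * of_real x ^ j)) - (d 0 x - (\<Sum>j\<le>N. b j * of_real x ^ j))"
        by (simp add: sum_subtractf left_diff_distrib)
      then have "norm (\<Sum>j\<le>N. (b j - c j) * of_real x ^ j)
          \<le> norm (d 0 x - (\<Sum>j\<le>N. c j * of_real x ^ j)) + norm (d 0 x - (\<Sum>j\<le>N. b j * of_real x ^ j))"
        by (simp only: norm_triangle_ineq4)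
      with x show "norm (\<Sum>j\<le>N. (b j - c j) * of_real x ^ j) / x ^ N
          \<le> norm (d 0 x - (\<Sum>j\<le>N. c j * of_real x ^ j)) / x ^ N
            + norm (d 0 x - (\<Sum>j\<le>N. b j * of_real x ^ j)) / x ^ N"
        by (simp add: add_divide_distrib[symmetric] divide_right_mono)
    qed simp
  qed
  from poly_coeffs_zero_if_little_o[OF this] j have "b j = c j" by simp
  then show ?thesis by (simp add: b_def divide_eq_eq mult.commute)
qed

definition has_even_expansion :: "(real \<Rightarrow> complex) \<Rightarrow> bool" where
  "has_even_expansion f \<longleftrightarrow> (\<forall>N. \<exists>c. (\<forall>j\<le>N. odd j \<longrightarrow> c j = 0) \<and>
      ((\<lambda>\<mu>. norm (f \<mu> - (\<Sum>j\<le>N. c j * of_real \<mu> ^ j)) / \<mu> ^ N) \<longlongrightarrow> 0) (at_right 0))"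

lemma odd_taylor_vanish_iff: "odd_taylor_vanish H \<longleftrightarrow> (\<forall>\<theta>. has_even_expansion (H \<theta>))"
  unfolding odd_taylor_vanish_def has_even_expansion_def ..

lemma has_even_expansion_cong:
  assumes "\<And>\<mu>. 0 < \<mu> \<Longrightarrow> \<mu> < 1 \<Longrightarrow> f \<mu> = g \<mu>"
  shows "has_even_expansion f \<longleftrightarrow> has_even_expansion g"
proof -
  have "((\<lambda>\<mu>. norm (f \<mu> - (\<Sum>j\<le>N. c j * of_real \<mu> ^ j)) / \<mu> ^ N) \<longlongrightarrow> 0) (at_right 0)
    \<longleftrightarrow> ((\<lambda>\<mu>. norm (g \<mu> - (\<Sum>j\<le>N. c j * of_real \<mu> ^ j)) / \<mu> ^ N) \<longlongrightarrow> 0) (at_right 0)"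
    for c N by (intro tendsto_cong eventually_at_rightI[of 0 1]) (use assms in auto)
  then show ?thesis unfolding has_even_expansion_def by simp
qed

lemma has_even_expansion_arcsin:
  assumes w: "deriv_chain UNIV w" and even: "\<And>t. \<bar>t\<bar> < pi / 2 \<Longrightarrow> w 0 (- t) = w 0 t"
  shows "has_even_expansion (\<lambda>\<mu>. w 0 (arcsin \<mu>))"
proof -
  obtain K where K0: "K 0 = (\<lambda>\<mu>. w 0 (arcsin \<mu>))" and K: "deriv_chain {-1<..<1} K"
    using deriv_chain_arcsin[OF w] by blast
  have "K 0 (- x) = K 0 x" if x: "x \<in> {-1<..<1}" for x
  proof -
    have "\<bar>arcsin x\<bar> < pi / 2" using arcsin_lt_bounded[of x] x by (auto simp: abs_less_iff)
    with even x show ?thesis by (simp add: K0 arcsin_minus)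
  qed
  then have odd_zero: "K j 0 = 0" if "odd j" for j
    using deriv_chain_even_imp_odd_derivs_zero[OF K _ _ _ _ that] by simp
  show ?thesis
    unfolding has_even_expansion_def
  proof
    fix N
    show "\<exists>c. (\<forall>j\<le>N. odd j \<longrightarrow> c j = 0) \<and>
        ((\<lambda>\<mu>. norm (w 0 (arcsin \<mu>) - (\<Sum>j\<le>N. c j * of_real \<mu> ^ j)) / \<mu> ^ N) \<longlongrightarrow> 0) (at_right 0)"
      using odd_zero deriv_chain_taylor[OF K, of N]
      by (intro exI[of _ "\<lambda>j. K j 0 / of_real (fact j)"]) (simp add: K0 scaleR_monomial)
  qed
qed

lemma filterlim_sin_at_right_0: "filterlim (sin :: real \<Rightarrow> real) (at_right 0) (at_right 0)"
proof (rule tendsto_imp_filterlim_at_right)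
  show "((sin :: real \<Rightarrow> real) \<longlongrightarrow> 0) (at_right 0)"
    using tendsto_sin[OF tendsto_ident_at[of "0::real" "{0<..}"]] by simp
  show "\<forall>\<^sub>F x in at_right 0. 0 < sin (x :: real)"
    by (rule eventually_at_rightI[of 0 pi]) (auto intro: sin_gt_zero)
qed

lemma little_o_compose_sin:
  assumes "((\<lambda>x. norm (\<phi> x) / x ^ N) \<longlongrightarrow> 0) (at_right 0)"
  shows "((\<lambda>t. norm (\<phi> (sin t)) / t ^ N) \<longlongrightarrow> 0) (at_right 0)"
proof (rule tendsto_sandwich[OF _ _ tendsto_const filterlim_compose[OF assms filterlim_sin_at_right_0]])
  show "\<forall>\<^sub>F t in at_right 0. 0 \<le> norm (\<phi> (sin t)) / t ^ N"
    by (rule eventually_at_rightI[of 0 1]) auto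
  show "\<forall>\<^sub>F t in at_right 0. norm (\<phi> (sin t)) / t ^ N \<le> norm (\<phi> (sin t)) / sin t ^ N"
  proof (rule eventually_at_rightI[of 0 pi])
    fix t :: real assume "t \<in> {0<..<pi}"
    then have "0 < sin t" "sin t \<le> t" by (auto intro: sin_gt_zero sin_x_le_x)
    then have "sin t ^ N \<le> t ^ N" "0 < sin t ^ N" by (auto intro: power_mono)
    then show "norm (\<phi> (sin t)) / t ^ N \<le> norm (\<phi> (sin t)) / sin t ^ N"
      by (intro divide_left_mono) auto
  qed simp
qed

lemma odd_derivs_zero_if_has_even_expansion_arcsin:
  assumes w: "deriv_chain UNIV w" and expansion: "has_even_expansion (\<lambda>\<mu>. w 0 (arcsin \<mu>))"
    and k: "odd k"
  shows "w k 0 = 0"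
proof -
  obtain K where K0: "K 0 = (\<lambda>\<mu>. w 0 (arcsin \<mu>))" and K: "deriv_chain {-1<..<1} K"
    using deriv_chain_arcsin[OF w] by blast
  have K_odd: "K j 0 = 0" if j: "odd j" for j
  proof -
    obtain c where "\<forall>i\<le>j. odd i \<longrightarrow> c i = 0"
      "((\<lambda>\<mu>. norm (K 0 \<mu> - (\<Sum>i\<le>j. c i * of_real \<mu> ^ i)) / \<mu> ^ j) \<longlongrightarrow> 0) (at_right 0)"
      using expansion unfolding has_even_expansion_def K0 by blast
    with j show ?thesis using deriv_chain_taylor_unique[OF K _ _ _ order_refl] by simp
  qed
  \<comment> \<open>The odd part of \<open>w 0\<close> is \<open>\<phi> 0 \<circ> sin\<close>, and \<open>\<phi> 0\<close> is flat at \<open>0\<close>.\<close>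
  define \<phi> where "\<phi> j x = K j x - (-1) ^ j *\<^sub>R K j (- x)" for j x
  have \<phi>: "deriv_chain {-1<..<1} \<phi>"
    unfolding \<phi>_def by (rule deriv_chain_minus_reflect[OF K]) simp
  have "\<phi> j 0 = 0" for j
    using K_odd[of j] by (cases "even j") (simp_all add: \<phi>_def)
  then have "((\<lambda>x. norm (\<phi> 0 x) / x ^ k) \<longlongrightarrow> 0) (at_right 0)"
    using deriv_chain_taylor[OF \<phi>, of k] by simp
  from little_o_compose_sin[OF this]
  have "((\<lambda>t. norm ((w 0 t - (-1) ^ 0 *\<^sub>R w 0 (- t)) - (\<Sum>j\<le>k. 0 * of_real t ^ j)) / t ^ k)
      \<longlongrightarrow> 0) (at_right 0)"
  proof (rule tendsto_cong[THEN iffD1, rotated], intro eventually_at_rightI[of 0 "pi / 2"])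
    fix t :: real assume "t \<in> {0<..<pi / 2}"
    then have "arcsin (sin t) = t" by (auto intro!: arcsin_sin)
    then show "norm (\<phi> 0 (sin t)) / t ^ k
        = norm ((w 0 t - (-1) ^ 0 *\<^sub>R w 0 (- t)) - (\<Sum>j\<le>k. 0 * of_real t ^ j)) / t ^ k"
      by (simp add: \<phi>_def K0 arcsin_minus)
  qed simp
  moreover have "deriv_chain UNIV (\<lambda>j t. w j t - (-1) ^ j *\<^sub>R w j (- t))"
    by (rule deriv_chain_minus_reflect[OF w]) simp
  ultimately have "w k 0 - (-1) ^ k *\<^sub>R w k (- 0) = of_real (fact k) * 0"
    by (intro deriv_chain_taylor_unique[OF _ open_UNIV UNIV_I _ order_refl])
  with k have "w k 0 + w k 0 = 0" by simp
  then show ?thesis by simp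
qed

section \<open>Smooth functions of two real variables\<close>

declare Ck2.simps[simp del]

lemma Ck2_SucI:
  "(\<And>x. (f has_derivative (\<lambda>v. fst v *\<^sub>R D1 x + snd v *\<^sub>R D2 x)) (at x)) \<Longrightarrow> Ck2 n D1 \<Longrightarrow> Ck2 n D2
   \<Longrightarrow> Ck2 (Suc n) f"
  unfolding Ck2.simps(2) by blast

lemma Ck2_SucE:
  assumes "Ck2 (Suc n) f"
  obtains D1 D2 where "\<And>x. (f has_derivative (\<lambda>v. fst v *\<^sub>R D1 x + snd v *\<^sub>R D2 x)) (at x)"
    "Ck2 n D1" "Ck2 n D2"
  using assms unfolding Ck2.simps(2) by blast

lemma Ck2_0I: "(\<And>x. (f has_derivative (\<lambda>v. fst v *\<^sub>R D1 x + snd v *\<^sub>R D2 x)) (at x)) \<Longrightarrow> Ck2 0 f"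
  by (auto simp: Ck2.simps(1) intro!: continuous_at_imp_continuous_on
      dest: has_derivative_continuous)

definition pd1 :: "(real \<times> real \<Rightarrow> complex) \<Rightarrow> real \<times> real \<Rightarrow> complex" where
  "pd1 F x = frechet_derivative F (at x) (1, 0)"

definition pd2 :: "(real \<times> real \<Rightarrow> complex) \<Rightarrow> real \<times> real \<Rightarrow> complex" where
  "pd2 F x = frechet_derivative F (at x) (0, 1)"

lemma pd_eq:
  assumes "(F has_derivative (\<lambda>v. fst v *\<^sub>R d1 + snd v *\<^sub>R d2)) (at x)"
  shows "pd1 F x = d1" "pd2 F x = d2"
  using frechet_derivative_at[OF assms, symmetric] by (simp_all add: pd1_def pd2_def)

lemma Ck2_Suc_pd:
  assumes "Ck2 (Suc n) F"
  shows "(F has_derivative (\<lambda>v. fst v *\<^sub>R pd1 F x + snd v *\<^sub>R pd2 F x)) (at x)"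
    and "Ck2 n (pd1 F)" "Ck2 n (pd2 F)"
proof -
  obtain D1 D2 where D: "\<And>x. (F has_derivative (\<lambda>v. fst v *\<^sub>R D1 x + snd v *\<^sub>R D2 x)) (at x)"
    "Ck2 n D1" "Ck2 n D2" using assms by (rule Ck2_SucE) blast
  then have "pd1 F = D1" "pd2 F = D2" using pd_eq by blast+
  with D show "(F has_derivative (\<lambda>v. fst v *\<^sub>R pd1 F x + snd v *\<^sub>R pd2 F x)) (at x)"
    "Ck2 n (pd1 F)" "Ck2 n (pd2 F)" by simp_all
qed

lemma smooth2_has_derivative:
  "smooth2 F \<Longrightarrow> (F has_derivative (\<lambda>v. fst v *\<^sub>R pd1 F x + snd v *\<^sub>R pd2 F x)) (at x)"
  unfolding smooth2_def using Ck2_Suc_pd(1) by blast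

lemma smooth2_pd1: "smooth2 F \<Longrightarrow> smooth2 (pd1 F)"
  and smooth2_pd2: "smooth2 F \<Longrightarrow> smooth2 (pd2 F)"
  unfolding smooth2_def using Ck2_Suc_pd(2,3) by blast+

lemma Ck2_add: "Ck2 n F \<Longrightarrow> Ck2 n G \<Longrightarrow> Ck2 n (\<lambda>x. F x + G x)"
proof (induction n arbitrary: F G)
  case 0
  then show ?case by (auto intro: continuous_on_add simp: Ck2.simps(1))
next
  case (Suc n)
  obtain F1 F2 where F: "\<And>x. (F has_derivative (\<lambda>v. fst v *\<^sub>R F1 x + snd v *\<^sub>R F2 x)) (at x)"
    "Ck2 n F1" "Ck2 n F2" using Suc.prems(1) by (rule Ck2_SucE) blast
  obtain G1 G2 where G: "\<And>x. (G has_derivative (\<lambda>v. fst v *\<^sub>R G1 x + snd v *\<^sub>R G2 x)) (at x)"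
    "Ck2 n G1" "Ck2 n G2" using Suc.prems(2) by (rule Ck2_SucE) blast
  have "((\<lambda>x. F x + G x) has_derivative
      (\<lambda>v. fst v *\<^sub>R (F1 x + G1 x) + snd v *\<^sub>R (F2 x + G2 x))) (at x)" for x
    using has_derivative_add[OF F(1) G(1)] by (simp add: scaleR_add_right algebra_simps)
  then show ?case by (rule Ck2_SucI) (use Suc.IH F G in auto)
qed

lemma Ck2_scaleR: "Ck2 n F \<Longrightarrow> Ck2 n (\<lambda>x. r *\<^sub>R F x)"
proof (induction n arbitrary: F)
  case 0
  then show ?case by (auto intro: continuous_on_scaleR continuous_on_const simp: Ck2.simps(1))
next
  case (Suc n)
  obtain F1 F2 where F: "\<And>x. (F has_derivative (\<lambda>v. fst v *\<^sub>R F1 x + snd v *\<^sub>R F2 x)) (at x)"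
    "Ck2 n F1" "Ck2 n F2" using Suc.prems by (rule Ck2_SucE) blast
  have "((\<lambda>x. r *\<^sub>R F x) has_derivative
      (\<lambda>v. fst v *\<^sub>R (r *\<^sub>R F1 x) + snd v *\<^sub>R (r *\<^sub>R F2 x))) (at x)" for x
    using has_derivative_scaleR_right[OF F(1)[of x], of r] by (simp add: scaleR_add_right mult.commute)
  then show ?case by (rule Ck2_SucI) (use Suc.IH F in auto)
qed

lemma smooth2_diff: "smooth2 F \<Longrightarrow> smooth2 G \<Longrightarrow> smooth2 (\<lambda>x. F x - G x)"
  unfolding smooth2_def using Ck2_add[of _ F "\<lambda>x. (-1) *\<^sub>R G x"] Ck2_scaleR[of _ G "-1"] by simp

lemma pd_add:
  assumes "smooth2 F" "smooth2 G"
  shows "pd1 (\<lambda>x. F x + G x) = (\<lambda>x. pd1 F x + pd1 G x)"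
    and "pd2 (\<lambda>x. F x + G x) = (\<lambda>x. pd2 F x + pd2 G x)"
proof -
  have "((\<lambda>x. F x + G x) has_derivative
      (\<lambda>v. fst v *\<^sub>R (pd1 F x + pd1 G x) + snd v *\<^sub>R (pd2 F x + pd2 G x))) (at x)" for x
    using has_derivative_add[OF smooth2_has_derivative[OF assms(1)] smooth2_has_derivative[OF assms(2)]]
    by (simp add: scaleR_add_right algebra_simps)
  then show "pd1 (\<lambda>x. F x + G x) = (\<lambda>x. pd1 F x + pd1 G x)"
    "pd2 (\<lambda>x. F x + G x) = (\<lambda>x. pd2 F x + pd2 G x)"
    by (auto intro!: ext pd_eq)
qed

lemma pd_diff:
  assumes "smooth2 F" "smooth2 G"
  shows "pd1 (\<lambda>x. F x - G x) = (\<lambda>x. pd1 F x - pd1 G x)"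
    and "pd2 (\<lambda>x. F x - G x) = (\<lambda>x. pd2 F x - pd2 G x)"
proof -
  have "((\<lambda>x. F x - G x) has_derivative
      (\<lambda>v. fst v *\<^sub>R (pd1 F x - pd1 G x) + snd v *\<^sub>R (pd2 F x - pd2 G x))) (at x)" for x
    using has_derivative_diff[OF smooth2_has_derivative[OF assms(1)] smooth2_has_derivative[OF assms(2)]]
    by (simp add: scaleR_diff_right algebra_simps)
  then show "pd1 (\<lambda>x. F x - G x) = (\<lambda>x. pd1 F x - pd1 G x)"
    "pd2 (\<lambda>x. F x - G x) = (\<lambda>x. pd2 F x - pd2 G x)"
    by (auto intro!: ext pd_eq)
qed

lemma Ck2_compose_affine:
  "Ck2 n F \<Longrightarrow> Ck2 n (\<lambda>x. F (p + a * fst x + b * snd x, q + c * fst x + d * snd x))"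
proof (induction n arbitrary: F)
  case 0
  have "continuous_on UNIV (\<lambda>x::real \<times> real. (p + a * fst x + b * snd x, q + c * fst x + d * snd x))"
    by (intro continuous_intros)
  with 0 show ?case by (auto simp: Ck2.simps(1) intro: continuous_on_compose2)
next
  case (Suc n)
  define T where "T x = (p + a * fst x + b * snd x, q + c * fst x + d * snd x)" for x :: "real \<times> real"
  obtain F1 F2 where F: "\<And>x. (F has_derivative (\<lambda>v. fst v *\<^sub>R F1 x + snd v *\<^sub>R F2 x)) (at x)"
    "Ck2 n F1" "Ck2 n F2" using Suc.prems by (rule Ck2_SucE) blast
  have "(T has_derivative (\<lambda>v. (a * fst v + b * snd v, c * fst v + d * snd v))) (at x)" for x
    unfolding T_def by (auto intro!: derivative_eq_intros)
  from has_derivative_compose[OF this F(1)]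
  have "((\<lambda>x. F (T x)) has_derivative (\<lambda>v. fst v *\<^sub>R (a *\<^sub>R F1 (T x) + c *\<^sub>R F2 (T x))
      + snd v *\<^sub>R (b *\<^sub>R F1 (T x) + d *\<^sub>R F2 (T x)))) (at x)" for x
    by (simp add: algebra_simps scaleR_add_left scaleR_add_right)
  moreover have "Ck2 n (\<lambda>x. a *\<^sub>R F1 (T x) + c *\<^sub>R F2 (T x))" "Ck2 n (\<lambda>x. b *\<^sub>R F1 (T x) + d *\<^sub>R F2 (T x))"
    using Suc.IH F unfolding T_def by (auto intro!: Ck2_add Ck2_scaleR)
  ultimately show ?case unfolding T_def by (rule Ck2_SucI)
qed

lemma smooth2_compose_affine:
  "smooth2 F \<Longrightarrow> smooth2 (\<lambda>x. F (p + a * fst x + b * snd x, q + c * fst x + d * snd x))"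
  unfolding smooth2_def using Ck2_compose_affine by blast

lemma vector_derivative_bound_interval:
  fixes f :: "real \<Rightarrow> 'a::real_normed_vector"
  assumes ab: "a \<le> b"
    and der: "\<And>x. x \<in> {a..b} \<Longrightarrow> (f has_vector_derivative f' x) (at x)"
    and B: "\<And>x. x \<in> {a..b} \<Longrightarrow> norm (f' x) \<le> B"
  shows "norm (f b - f a) \<le> B * (b - a)"
proof -
  have "norm (f b - f a) \<le> B * norm (b - a)"
  proof (rule differentiable_bound[where f'="\<lambda>x h. h *\<^sub>R f' x"])
    show "convex {a..b}" by simp
    show "(f has_derivative (\<lambda>h. h *\<^sub>R f' x)) (at x within {a..b})" if "x \<in> {a..b}" for x
      using der[OF that] unfolding has_vector_derivative_def
      by (rule has_derivative_at_withinI)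
    show "onorm (\<lambda>h. h *\<^sub>R f' x) \<le> B" if "x \<in> {a..b}" for x
      using onorm_scaleR_left[OF bounded_linear_ident, of "f' x"] onorm_id[where 'a=real] B[OF that] by simp
  qed (use ab in auto)
  then show ?thesis using ab by simp
qed

lemma has_vector_derivative_pd1_slice:
  assumes "smooth2 F"
  shows "((\<lambda>s. F (a + s, b)) has_vector_derivative pd1 F (a + s, b)) (at s)"
proof -
  have p: "((\<lambda>s. (a + s, b)) has_derivative (\<lambda>t. (t, 0))) (at s)"
    by (auto intro!: derivative_eq_intros has_derivative_Pair)
  show ?thesis
    using has_derivative_compose[OF p smooth2_has_derivative[OF assms]]
    unfolding has_vector_derivative_def by simp
qed

lemma has_vector_derivative_pd2_slice:
  assumes "smooth2 F"
  shows "((\<lambda>r. F (a, b + r)) has_vector_derivative pd2 F (a, b + r)) (at r)"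
proof -
  have p: "((\<lambda>r. (a, b + r)) has_derivative (\<lambda>t. (0, t))) (at r)"
    by (auto intro!: derivative_eq_intros has_derivative_Pair)
  show ?thesis
    using has_derivative_compose[OF p smooth2_has_derivative[OF assms]]
    unfolding has_vector_derivative_def by simp
qed

lemma second_difference_bound:
  fixes \<phi> P Q :: "real \<Rightarrow> real \<Rightarrow> 'a::real_normed_vector"
  assumes h: "0 \<le> h"
    and dP: "\<And>s r. ((\<lambda>s. \<phi> s r) has_vector_derivative P s r) (at s)"
    and dQ: "\<And>s r. ((\<lambda>r. P s r) has_vector_derivative Q s r) (at r)"
    and bnd: "\<And>s r. s \<in> {0..h} \<Longrightarrow> r \<in> {0..h} \<Longrightarrow> norm (Q s r - c) \<le> e"
  shows "norm (\<phi> h h - \<phi> h 0 - \<phi> 0 h + \<phi> 0 0 - (h * h) *\<^sub>R c) \<le> e * h * h"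
proof -
  define g where "g s = \<phi> s h - \<phi> s 0 - (s * h) *\<^sub>R c" for s
  have kb: "norm (P s h - P s 0 - h *\<^sub>R c) \<le> e * h" if "s \<in> {0..h}" for s
  proof -
    have "norm ((P s h - h *\<^sub>R c) - (P s 0 - 0 *\<^sub>R c)) \<le> e * (h - 0)"
    proof (rule vector_derivative_bound_interval[OF h, where f="\<lambda>r. P s r - r *\<^sub>R c" and f'="\<lambda>r. Q s r - c"])
      fix r assume "r \<in> {0..h}"
      show "((\<lambda>r. P s r - r *\<^sub>R c) has_vector_derivative Q s r - c) (at r)"
        using has_vector_derivative_diff[OF dQ[where s=s and r=r] has_vector_derivative_scaleR[OF DERIV_ident has_vector_derivative_const[of c]]]
        by simp
      show "norm (Q s r - c) \<le> e" using bnd that \<open>r \<in> {0..h}\<close> by blast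
    qed
    then show ?thesis by (simp add: algebra_simps)
  qed
  have "norm (g h - g 0) \<le> (e * h) * (h - 0)"
  proof (rule vector_derivative_bound_interval[OF h, where f'="\<lambda>s. P s h - P s 0 - h *\<^sub>R c"])
    fix s assume "s \<in> {0..h}"
    show "(g has_vector_derivative P s h - P s 0 - h *\<^sub>R c) (at s)"
      unfolding g_def
      using has_vector_derivative_diff[OF has_vector_derivative_diff[OF dP[where s=s and r=h] dP[where s=s and r=0]]
          has_vector_derivative_scaleR[OF DERIV_cmult_right[OF DERIV_ident, of h] has_vector_derivative_const[of c]]]
      by simp
    show "norm (P s h - P s 0 - h *\<^sub>R c) \<le> e * h" using kb \<open>s \<in> {0..h}\<close> .
  qed
  moreover have "g h - g 0 = \<phi> h h - \<phi> h 0 - \<phi> 0 h + \<phi> 0 0 - (h * h) *\<^sub>R c"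
    unfolding g_def by (simp add: algebra_simps)
  ultimately show ?thesis by (simp add: mult.assoc)
qed

lemma second_difference_pd2_pd1:
  assumes H: "smooth2 H" and h: "0 \<le> h"
    and near: "\<And>s r. s \<in> {0..h} \<Longrightarrow> r \<in> {0..h} \<Longrightarrow> norm (pd2 (pd1 H) (a + s, b + r) - pd2 (pd1 H) (a, b)) \<le> e"
  shows "norm (H (a + h, b + h) - H (a + h, b) - H (a, b + h) + H (a, b) - (h * h) *\<^sub>R pd2 (pd1 H) (a, b))
    \<le> e * h * h"
  using second_difference_bound[OF h, where \<phi>="\<lambda>s r. H (a + s, b + r)" and c="pd2 (pd1 H) (a, b)"
      and P="\<lambda>s r. pd1 H (a + s, b + r)" and Q="\<lambda>s r. pd2 (pd1 H) (a + s, b + r)"]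
    has_vector_derivative_pd1_slice[OF H] has_vector_derivative_pd2_slice[OF smooth2_pd1[OF H]] near
  by simp

lemma second_difference_pd1_pd2:
  assumes H: "smooth2 H" and h: "0 \<le> h"
    and near: "\<And>s r. s \<in> {0..h} \<Longrightarrow> r \<in> {0..h} \<Longrightarrow> norm (pd1 (pd2 H) (a + s, b + r) - pd1 (pd2 H) (a, b)) \<le> e"
  shows "norm (H (a + h, b + h) - H (a + h, b) - H (a, b + h) + H (a, b) - (h * h) *\<^sub>R pd1 (pd2 H) (a, b))
    \<le> e * h * h"
proof -
  have "norm (H (a + h, b + h) - H (a, b + h) - H (a + h, b) + H (a, b) - (h * h) *\<^sub>R pd1 (pd2 H) (a, b))
    \<le> e * h * h"
    using second_difference_bound[OF h, where \<phi>="\<lambda>r s. H (a + s, b + r)" and c="pd1 (pd2 H) (a, b)"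
        and P="\<lambda>r s. pd2 H (a + s, b + r)" and Q="\<lambda>r s. pd1 (pd2 H) (a + s, b + r)"]
      has_vector_derivative_pd2_slice[OF H] has_vector_derivative_pd1_slice[OF smooth2_pd2[OF H]] near
    by simp
  then show ?thesis by (simp add: algebra_simps)
qed

lemma pd1_pd2_commute:
  assumes H: "smooth2 H"
  shows "pd2 (pd1 H) x = pd1 (pd2 H) x"
proof -
  obtain a b where x: "x = (a, b)" by (cases x)
  have cont: "isCont F x" if "smooth2 F" for F
    using has_derivative_continuous[OF smooth2_has_derivative[OF that]] .
  have "norm (pd2 (pd1 H) x - pd1 (pd2 H) x) \<le> e" if e: "e > 0" for e
  proof -
    obtain d1 where d1: "d1 > 0" "\<And>y. dist y x < d1 \<Longrightarrow> dist (pd2 (pd1 H) y) (pd2 (pd1 H) x) < e / 2"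
      using cont[OF smooth2_pd2[OF smooth2_pd1[OF H]]] e
      unfolding continuous_at_eps_delta by (metis half_gt_zero)
    obtain d2 where d2: "d2 > 0" "\<And>y. dist y x < d2 \<Longrightarrow> dist (pd1 (pd2 H) y) (pd1 (pd2 H) x) < e / 2"
      using cont[OF smooth2_pd1[OF smooth2_pd2[OF H]]] e
      unfolding continuous_at_eps_delta by (metis half_gt_zero)
    define d where "d = min d1 d2"
    have d: "d > 0" "\<And>y. dist y x < d \<Longrightarrow>
        dist (pd2 (pd1 H) y) (pd2 (pd1 H) x) < e / 2 \<and> dist (pd1 (pd2 H) y) (pd1 (pd2 H) x) < e / 2"
      using d1 d2 unfolding d_def by auto
    define h where "h = d / 4"
    have h: "h > 0" using d unfolding h_def by simp
    have near: "dist (a + s, b + r) x < d" if "s \<in> {0..h}" "r \<in> {0..h}" for s r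
    proof -
      have "dist (a + s, b + r) x \<le> norm s + norm r"
        using norm_Pair_le[of s r] unfolding x dist_norm by simp
      also have "\<dots> < d" using that d unfolding h_def by auto
      finally show ?thesis .
    qed
    let ?\<Delta> = "H (a + h, b + h) - H (a + h, b) - H (a, b + h) + H (a, b)"
    have "norm (?\<Delta> - (h * h) *\<^sub>R pd2 (pd1 H) x) \<le> e / 2 * h * h"
      unfolding x using d(2) near
      by (intro second_difference_pd2_pd1[OF H less_imp_le[OF h]] less_imp_le) (auto simp: dist_norm x)
    moreover have "norm (?\<Delta> - (h * h) *\<^sub>R pd1 (pd2 H) x) \<le> e / 2 * h * h"
      unfolding x using d(2) near
      by (intro second_difference_pd1_pd2[OF H less_imp_le[OF h]] less_imp_le) (auto simp: dist_norm x)
    ultimately have "norm ((h * h) *\<^sub>R (pd2 (pd1 H) x - pd1 (pd2 H) x)) \<le> e * (h * h)"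
      using norm_triangle_ineq4[of "?\<Delta> - (h * h) *\<^sub>R pd1 (pd2 H) x" "?\<Delta> - (h * h) *\<^sub>R pd2 (pd1 H) x"]
      by (simp add: algebra_simps)
    with h show ?thesis by (simp add: mult.commute)
  qed
  then show ?thesis using field_le_epsilon[of "norm (pd2 (pd1 H) x - pd1 (pd2 H) x)" 0] by simp
qed

text \<open>Differentiation along the lines on which \<open>\<theta> = \<beta> + tan\<^sup>-\<^sup>1 a\<close> is constant.\<close>

definition pd_antidiag :: "(real \<times> real \<Rightarrow> complex) \<Rightarrow> real \<times> real \<Rightarrow> complex" where
  "pd_antidiag F x = pd2 F x - pd1 F x"

lemma smooth2_pd_antidiag_pow: "smooth2 F \<Longrightarrow> smooth2 ((pd_antidiag ^^ k) F)"
proof (induction k)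
  case (Suc k)
  then have "smooth2 (\<lambda>x. pd2 ((pd_antidiag ^^ k) F) x - pd1 ((pd_antidiag ^^ k) F) x)"
    by (intro smooth2_diff smooth2_pd1 smooth2_pd2)
  then show ?case by (simp add: pd_antidiag_def[abs_def])
qed simp

lemma pd1_pd_antidiag_pow: "smooth2 F \<Longrightarrow> pd1 ((pd_antidiag ^^ k) F) = (pd_antidiag ^^ k) (pd1 F)"
proof (induction k)
  case (Suc k)
  have "smooth2 ((pd_antidiag ^^ k) F)" by (rule smooth2_pd_antidiag_pow[OF Suc.prems])
  then have "pd1 (pd_antidiag ((pd_antidiag ^^ k) F)) = pd_antidiag (pd1 ((pd_antidiag ^^ k) F))"
    unfolding pd_antidiag_def[abs_def]
    by (simp add: pd_diff(1)[OF smooth2_pd2 smooth2_pd1] pd1_pd2_commute)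
  with Suc show ?case by simp
qed simp

lemma pd_antidiag_pow_add:
  assumes "smooth2 F" "smooth2 G"
  shows "(pd_antidiag ^^ k) (\<lambda>x. F x + G x) = (\<lambda>x. (pd_antidiag ^^ k) F x + (pd_antidiag ^^ k) G x)"
proof (induction k)
  case (Suc k)
  show ?case
    using pd_add[OF smooth2_pd_antidiag_pow[OF assms(1)] smooth2_pd_antidiag_pow[OF assms(2)], of k k] Suc
    by (simp add: pd_antidiag_def[abs_def] algebra_simps)
qed simp

lemma has_vector_derivative_antidiag_path:
  assumes "smooth2 H"
  shows "((\<lambda>t. H (\<theta> - s * t, c + s * t)) has_vector_derivative
    s *\<^sub>R pd_antidiag H (\<theta> - s * t, c + s * t)) (at t)"
proof -
  have "((\<lambda>t. (\<theta> - s * t, c + s * t)) has_derivative (\<lambda>h. (- (s * h), s * h))) (at t)"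
    by (auto intro!: derivative_eq_intros)
  from has_derivative_compose[OF this smooth2_has_derivative[OF assms]] show ?thesis
    unfolding has_vector_derivative_def pd_antidiag_def by (simp add: algebra_simps)
qed

lemma deriv_chain_antidiag_path:
  assumes "smooth2 G"
  shows "deriv_chain UNIV (\<lambda>k t. s ^ k *\<^sub>R (pd_antidiag ^^ k) G (\<theta> - s * t, c + s * t))"
  unfolding deriv_chain_def
proof (intro allI ballI)
  fix k t
  have "((\<lambda>t. (pd_antidiag ^^ k) G (\<theta> - s * t, c + s * t)) has_vector_derivative
      s *\<^sub>R (pd_antidiag ^^ Suc k) G (\<theta> - s * t, c + s * t)) (at t)"
    using has_vector_derivative_antidiag_path[OF smooth2_pd_antidiag_pow[OF assms]] by simp
  from has_vector_derivative_scaleR[OF DERIV_const[of "s ^ k"] this]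
  show "((\<lambda>t. s ^ k *\<^sub>R (pd_antidiag ^^ k) G (\<theta> - s * t, c + s * t)) has_vector_derivative
      s ^ Suc k *\<^sub>R (pd_antidiag ^^ Suc k) G (\<theta> - s * t, c + s * t)) (at t)"
    by (simp add: mult.commute)
qed

lemma pd1_eq_on_line:
  assumes F: "smooth2 F" and K: "smooth2 K" and eq: "\<And>\<beta>. F (\<beta>, c) = K (\<beta>, c)"
  shows "pd1 F (\<beta>, c) = pd1 K (\<beta>, c)"
proof -
  have "((\<lambda>s. F (\<beta> + s, c)) has_vector_derivative pd1 F (\<beta> + 0, c)) (at 0)"
    by (rule has_vector_derivative_pd1_slice[OF F])
  moreover have "((\<lambda>s. F (\<beta> + s, c)) has_vector_derivative pd1 K (\<beta> + 0, c)) (at 0)"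
    using has_vector_derivative_pd1_slice[OF K, of \<beta> c 0] eq by simp
  ultimately show ?thesis using vector_derivative_unique_at by fastforce
qed

section \<open>Gluing along a line\<close>

text \<open>Only derivatives transversal to the line are compared; agreement of all partial derivatives
  follows by symmetry of second derivatives (\<open>agree_inf_order_pd1\<close>, \<open>agree_inf_order_pd2\<close>).\<close>

definition agree_inf_order :: "real \<Rightarrow> (real \<times> real \<Rightarrow> complex) \<Rightarrow> (real \<times> real \<Rightarrow> complex) \<Rightarrow> bool" where
  "agree_inf_order c F K \<longleftrightarrow> smooth2 F \<and> smooth2 K \<and>
     (\<forall>k \<beta>. (pd_antidiag ^^ k) F (\<beta>, c) = (pd_antidiag ^^ k) K (\<beta>, c))"

lemma agree_inf_order_sym: "agree_inf_order c F K \<Longrightarrow> agree_inf_order c K F"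
  unfolding agree_inf_order_def by simp

lemma agree_inf_order_pd1:
  assumes "agree_inf_order c F K"
  shows "agree_inf_order c (pd1 F) (pd1 K)"
proof -
  have F: "smooth2 F" and K: "smooth2 K" using assms unfolding agree_inf_order_def by auto
  have "pd1 ((pd_antidiag ^^ k) F) (\<beta>, c) = pd1 ((pd_antidiag ^^ k) K) (\<beta>, c)" for k \<beta>
    using assms unfolding agree_inf_order_def
    by (intro pd1_eq_on_line smooth2_pd_antidiag_pow) auto
  then show ?thesis
    unfolding agree_inf_order_def using F K
    by (simp add: smooth2_pd1 pd1_pd_antidiag_pow)
qed

lemma agree_inf_order_pd2:
  assumes agree: "agree_inf_order c F K"
  shows "agree_inf_order c (pd2 F) (pd2 K)"
proof -
  have F: "smooth2 F" and K: "smooth2 K" using agree unfolding agree_inf_order_def by auto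
  have split: "(pd_antidiag ^^ k) (pd2 H) = (\<lambda>x. (pd_antidiag ^^ Suc k) H x + (pd_antidiag ^^ k) (pd1 H) x)"
    if "smooth2 H" for H k
  proof -
    have "pd2 H = (\<lambda>x. pd_antidiag H x + pd1 H x)" by (simp add: pd_antidiag_def)
    then show ?thesis
      using pd_antidiag_pow_add[of "pd_antidiag H" "pd1 H" k] that
      by (simp add: smooth2_pd1 smooth2_pd_antidiag_pow[of _ 1, simplified] funpow_Suc_right
          del: funpow.simps)
  qed
  show ?thesis
    using agree agree_inf_order_pd1[OF agree] unfolding agree_inf_order_def
    by (simp add: split F K smooth2_pd2 del: funpow.simps)
qed

lemma agree_inf_order_on_line:
  assumes "agree_inf_order c F K"
  shows "F (\<beta>, c) = K (\<beta>, c)" "pd1 F (\<beta>, c) = pd1 K (\<beta>, c)" "pd2 F (\<beta>, c) = pd2 K (\<beta>, c)"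
  using assms agree_inf_order_pd1[OF assms] agree_inf_order_pd2[OF assms]
  unfolding agree_inf_order_def by (metis funpow_0)+

lemma has_derivative_if_eq_either:
  assumes F1: "(F1 has_derivative L) (at x)" and F2: "(F2 has_derivative L) (at x)"
    and eq: "G x = F1 x" "G x = F2 x" and U: "open U" "x \<in> U"
    and either: "\<And>y. y \<in> U \<Longrightarrow> G y = F1 y \<or> G y = F2 y"
  shows "(G has_derivative L) (at x)"
proof -
  let ?r = "\<lambda>F y. norm (F y - F x - L (y - x)) / norm (y - x)"
  have r1: "(?r F1 \<longlongrightarrow> 0) (at x)" and r2: "(?r F2 \<longlongrightarrow> 0) (at x)"
    using F1 F2 unfolding has_derivative_iff_norm by blast+
  have bound: "\<forall>\<^sub>F y in at x. ?r G y \<le> ?r F1 y + ?r F2 y"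
    using eventually_at_in_open'[OF U]
  proof (rule eventually_mono)
    fix y assume "y \<in> U"
    then consider "G y = F1 y" | "G y = F2 y" using either by blast
    then show "?r G y \<le> ?r F1 y + ?r F2 y"
    proof cases
      case 1
      have "0 \<le> ?r F2 y" by simp
      with 1 eq(1) show ?thesis by simp
    next
      case 2
      have "0 \<le> ?r F1 y" by simp
      with 2 eq(2) show ?thesis by simp
    qed
  qed
  have "(?r G \<longlongrightarrow> 0) (at x)"
    by (rule tendsto_sandwich[OF _ bound tendsto_const tendsto_add_zero[OF r1 r2]]) simp
  with F1 show ?thesis unfolding has_derivative_iff_norm by blast
qed

lemma has_derivative_glue_line:
  assumes agree: "agree_inf_order c F K"
  shows "((\<lambda>y. if snd y \<le> c then F y else K y) has_derivative
    (\<lambda>v. fst v *\<^sub>R (if snd x \<le> c then pd1 F x else pd1 K x)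
       + snd v *\<^sub>R (if snd x \<le> c then pd2 F x else pd2 K x))) (at x)"
proof -
  have F: "smooth2 F" and K: "smooth2 K" using agree unfolding agree_inf_order_def by auto
  have below: "open {y. snd y < c}" and above: "open {y. c < snd y}" for c :: real
    by (auto intro!: open_Collect_less continuous_intros)
  consider "snd x < c" | "c < snd x" | "snd x = c" by linarith
  then show ?thesis
  proof cases
    case 1
    have "((\<lambda>y. if snd y \<le> c then F y else K y) has_derivative
        (\<lambda>v. fst v *\<^sub>R pd1 F x + snd v *\<^sub>R pd2 F x)) (at x)"
      by (rule has_derivative_transform_within_open[OF smooth2_has_derivative[OF F] below])
        (use 1 in auto)
    with 1 show ?thesis by simp
  next
    case 2
    have "((\<lambda>y. if snd y \<le> c then F y else K y) has_derivative
        (\<lambda>v. fst v *\<^sub>R pd1 K x + snd v *\<^sub>R pd2 K x)) (at x)"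
      by (rule has_derivative_transform_within_open[OF smooth2_has_derivative[OF K] above])
        (use 2 in auto)
    with 2 show ?thesis by simp
  next
    case 3
    then obtain \<beta> where x: "x = (\<beta>, c)" by (cases x) auto
    note on_line = agree_inf_order_on_line[OF agree, of \<beta>]
    have "(K has_derivative (\<lambda>v. fst v *\<^sub>R pd1 F x + snd v *\<^sub>R pd2 F x)) (at x)"
      using smooth2_has_derivative[OF K, of x] on_line unfolding x by simp
    then have "((\<lambda>y. if snd y \<le> c then F y else K y) has_derivative
        (\<lambda>v. fst v *\<^sub>R pd1 F x + snd v *\<^sub>R pd2 F x)) (at x)"
      by (rule has_derivative_if_eq_either[OF smooth2_has_derivative[OF F] _ _ _ open_UNIV UNIV_I])
        (use on_line in \<open>auto simp: x\<close>)
    with 3 show ?thesis by simp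
  qed
qed

lemma smooth2_glue_line:
  assumes "agree_inf_order c F K"
  shows "smooth2 (\<lambda>y. if snd y \<le> c then F y else K y)"
proof -
  have "Ck2 n (\<lambda>y. if snd y \<le> c then F y else K y)" if "agree_inf_order c F K" for n F K
    using that
  proof (induction n arbitrary: F K)
    case 0
    show ?case by (rule Ck2_0I[OF has_derivative_glue_line[OF 0]])
  next
    case (Suc n)
    show ?case
      by (rule Ck2_SucI[OF has_derivative_glue_line[OF Suc.prems]])
        (use Suc.IH agree_inf_order_pd1[OF Suc.prems] agree_inf_order_pd2[OF Suc.prems] in auto)
  qed
  with assms show ?thesis unfolding smooth2_def by blast
qed

lemma has_derivative_if_locally_eq_smooth2:
  assumes U: "open U" "x \<in> U" and H: "smooth2 H" and eq: "\<forall>y\<in>U. G y = H y"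
  shows "(G has_derivative (\<lambda>v. fst v *\<^sub>R pd1 H x + snd v *\<^sub>R pd2 H x)) (at x)"
    and "pd1 G x = pd1 H x" "pd2 G x = pd2 H x"
proof -
  show "(G has_derivative (\<lambda>v. fst v *\<^sub>R pd1 H x + snd v *\<^sub>R pd2 H x)) (at x)"
    by (rule has_derivative_transform_within_open[OF smooth2_has_derivative[OF H] U]) (use eq in auto)
  then show "pd1 G x = pd1 H x" "pd2 G x = pd2 H x" by (rule pd_eq)+
qed

lemma smooth2_if_locally_smooth2:
  assumes "\<And>x. \<exists>U H. open U \<and> x \<in> U \<and> smooth2 H \<and> (\<forall>y\<in>U. G y = H y)"
  shows "smooth2 G"
proof -
  have "Ck2 n G" if "\<And>x. \<exists>U H. open U \<and> x \<in> U \<and> smooth2 H \<and> (\<forall>y\<in>U. G y = H y)" for n G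
    using that
  proof (induction n arbitrary: G)
    case 0
    show ?case
    proof (rule Ck2_0I[of G "pd1 G" "pd2 G"])
      fix x
      from "0" obtain U H where U: "open U" "x \<in> U" and H: "smooth2 H" "\<forall>y\<in>U. G y = H y"
        by blast
      then show "(G has_derivative (\<lambda>v. fst v *\<^sub>R pd1 G x + snd v *\<^sub>R pd2 G x)) (at x)"
        using has_derivative_if_locally_eq_smooth2[OF U H] by simp
    qed
  next
    case (Suc n)
    have deriv: "(G has_derivative (\<lambda>v. fst v *\<^sub>R pd1 G x + snd v *\<^sub>R pd2 G x)) (at x)"
      and pd1: "\<exists>U H. open U \<and> x \<in> U \<and> smooth2 H \<and> (\<forall>y\<in>U. pd1 G y = H y)"
      and pd2: "\<exists>U H. open U \<and> x \<in> U \<and> smooth2 H \<and> (\<forall>y\<in>U. pd2 G y = H y)" for x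
    proof -
      from Suc.prems obtain U H where U: "open U" "x \<in> U" and H: "smooth2 H" "\<forall>y\<in>U. G y = H y"
        by blast
      note local = has_derivative_if_locally_eq_smooth2[OF U(1) _ H]
      show "(G has_derivative (\<lambda>v. fst v *\<^sub>R pd1 G x + snd v *\<^sub>R pd2 G x)) (at x)"
        using local[OF U(2)] by simp
      show "\<exists>U H. open U \<and> x \<in> U \<and> smooth2 H \<and> (\<forall>y\<in>U. pd1 G y = H y)"
        using U smooth2_pd1[OF H(1)] local(2) by blast
      show "\<exists>U H. open U \<and> x \<in> U \<and> smooth2 H \<and> (\<forall>y\<in>U. pd2 G y = H y)"
        using U smooth2_pd2[OF H(1)] local(3) by blast
    qed
    show ?case by (rule Ck2_SucI[OF deriv Suc.IH Suc.IH]) (use pd1 pd2 in blast)+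
  qed
  with assms show ?thesis unfolding smooth2_def by blast
qed

lemma has_even_expansion_antidiag_path:
  assumes G: "smooth2 G"
    and even: "\<And>t. \<bar>t\<bar> < pi / 2 \<Longrightarrow> G (\<theta> - s * t, c + s * t) = G (\<theta> + s * t, c - s * t)"
  shows "has_even_expansion (\<lambda>\<mu>. G (\<theta> - s * arcsin \<mu>, c + s * arcsin \<mu>))"
  using has_even_expansion_arcsin[OF deriv_chain_antidiag_path[OF G, of s \<theta> c]] even by simp

lemma antidiag_derivs_odd_zero_if_has_even_expansion:
  assumes G: "smooth2 G" and s: "s \<noteq> 0"
    and expansion: "has_even_expansion (\<lambda>\<mu>. G (\<theta> - s * arcsin \<mu>, c + s * arcsin \<mu>))" and k: "odd k"
  shows "(pd_antidiag ^^ k) G (\<theta>, c) = 0"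
  using odd_derivs_zero_if_has_even_expansion_arcsin[OF deriv_chain_antidiag_path[OF G, of s \<theta> c] _ k]
    expansion s by simp

lemma agree_inf_order_if_reflection:
  assumes F: "smooth2 F" and R: "smooth2 R" and I: "open I" "0 \<in> closure I"
    and reflect: "\<And>\<theta> t. t \<in> I \<Longrightarrow> R (\<theta> - t, c + t) = F (\<theta> + t, c - t)"
    and odd_zero: "\<And>\<theta> k. odd k \<Longrightarrow> (pd_antidiag ^^ k) F (\<theta>, c) = 0"
  shows "agree_inf_order c F R"
  unfolding agree_inf_order_def
proof (intro conjI allI F R)
  fix k \<theta>
  have w: "deriv_chain UNIV (\<lambda>k t. (pd_antidiag ^^ k) F (\<theta> - t, c + t))"
    and r: "deriv_chain UNIV (\<lambda>k t. (pd_antidiag ^^ k) R (\<theta> - t, c + t))"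
    using deriv_chain_antidiag_path[OF F, of 1 \<theta> c] deriv_chain_antidiag_path[OF R, of 1 \<theta> c] by simp_all
  have "deriv_chain UNIV (\<lambda>k t. (-1) ^ k *\<^sub>R (pd_antidiag ^^ k) F (\<theta> + t, c - t))"
    using deriv_chain_reflect[OF w] by simp
  from deriv_chain_diff[OF r this]
  have "(pd_antidiag ^^ k) R (\<theta> - 0, c + 0) - (-1) ^ k *\<^sub>R (pd_antidiag ^^ k) F (\<theta> + 0, c - 0) = 0"
    by (rule deriv_chain_vanishes[OF _ I(1) subset_UNIV _ UNIV_I I(2)]) (simp add: reflect)
  then show "(pd_antidiag ^^ k) F (\<theta>, c) = (pd_antidiag ^^ k) R (\<theta>, c)"
    using odd_zero[of k \<theta>] by (cases "even k") auto
qed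

section \<open>The incoming boundary and the map \<open>A_plus\<close>\<close>

lemma atan_e_infinity [simp]: "atan_e \<infinity> = pi / 2" "atan_e (- \<infinity>) = - (pi / 2)"
  using atan_e.simps(2,3) by (simp_all only: PInfty_eq_infinity MInfty_eq_minfinity)

lemma mu_H_infinity [simp]: "mu_H \<infinity> = 0" "mu_H (- \<infinity>) = 0"
  using mu_H.simps(2,3) by (simp_all only: PInfty_eq_infinity MInfty_eq_minfinity)

lemma atan_e_in_Iplus: "atan_e a \<in> Iplus"
  using arctan_lbound arctan_ubound by (cases a) (auto simp: Iplus_def less_imp_le)

lemma atan_e_uminus: "atan_e (- a) = - atan_e a"
  by (cases a) (auto simp: arctan_minus)

lemma atan_e_surj: "\<alpha> \<in> Iplus \<Longrightarrow> \<exists>a. atan_e a = \<alpha>"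
proof -
  assume "\<alpha> \<in> Iplus"
  then consider "\<alpha> = pi / 2" | "\<alpha> = - (pi / 2)" | "- (pi / 2) < \<alpha>" "\<alpha> < pi / 2"
    unfolding Iplus_def by fastforce
  then show ?thesis
  proof cases
    case 3
    then show ?thesis by (intro exI[of _ "ereal (tan \<alpha>)"]) (simp add: arctan_tan)
  qed (use atan_e.simps in blast)+
qed

lemma mu_H_uminus: "mu_H (- a) = mu_H a"
  by (cases a) auto

lemma mu_H_pos_eq_iff:
  assumes \<mu>: "0 < \<mu>" "\<mu> < 1"
  shows "0 < a \<and> mu_H a = \<mu> \<longleftrightarrow> a = ereal (tan (arccos \<mu>))"
proof -
  have arccos: "0 < arccos \<mu>" "arccos \<mu> < pi / 2"
    using arccos_lt_bounded[of \<mu>] arccos_less_arccos[of 0 \<mu>] \<mu> by auto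
  have "0 < r \<and> cos (arctan r) = \<mu> \<longleftrightarrow> arctan r = arccos \<mu>" for r
  proof
    assume r: "0 < r \<and> cos (arctan r) = \<mu>"
    moreover have "arctan r \<le> pi" using arctan_ubound[of r] pi_gt_zero by linarith
    ultimately show "arctan r = arccos \<mu>"
      using arccos_cos[of "arctan r"] by simp
  next
    assume r: "arctan r = arccos \<mu>"
    then have "0 < r" using arccos(1) zero_less_arctan_iff by metis
    with r \<mu> show "0 < r \<and> cos (arctan r) = \<mu>" by simp
  qed
  moreover have "arctan r = arccos \<mu> \<longleftrightarrow> r = tan (arccos \<mu>)" for r
  proof
    show "arctan r = arccos \<mu> \<Longrightarrow> r = tan (arccos \<mu>)" by (metis tan_arctan)
    show "r = tan (arccos \<mu>) \<Longrightarrow> arctan r = arccos \<mu>" using arccos by (simp add: arctan_tan)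
  qed
  ultimately show ?thesis
    using \<mu> by (cases a) (auto simp: cos_arctan)
qed

lemma mu_H_neg_eq_iff:
  assumes "0 < \<mu>" "\<mu> < 1"
  shows "a < 0 \<and> mu_H a = \<mu> \<longleftrightarrow> a = - ereal (tan (arccos \<mu>))"
  using mu_H_pos_eq_iff[OF assms, of "- a"] by (auto simp: mu_H_uminus ereal_uminus_eq_reorder)

lemma atan_e_THE_pos:
  assumes "0 < \<mu>" "\<mu> < 1"
  shows "atan_e (THE a. 0 < a \<and> mu_H a = \<mu>) = arccos \<mu>"
  using mu_H_pos_eq_iff[OF assms] arccos_lt_bounded[of \<mu>] arccos_less_arccos[of 0 \<mu>] assms
  by (simp add: arctan_tan)

lemma atan_e_THE_neg:
  assumes "0 < \<mu>" "\<mu> < 1"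
  shows "atan_e (THE a. a < 0 \<and> mu_H a = \<mu>) = - arccos \<mu>"
  using mu_H_neg_eq_iff[OF assms] arccos_lt_bounded[of \<mu>] arccos_less_arccos[of 0 \<mu>] assms
  by (simp add: arctan_tan arctan_minus)

lemma h_coord_pos_eq:
  "0 < \<mu> \<Longrightarrow> \<mu> < 1 \<Longrightarrow> h_coord_pos (\<lambda>\<beta> a. u \<beta> (atan_e a)) \<theta> \<mu> = u (\<theta> - arccos \<mu>) (arccos \<mu>)"
  unfolding h_coord_pos_def by (simp add: atan_e_THE_pos)

lemma h_coord_neg_eq:
  "0 < \<mu> \<Longrightarrow> \<mu> < 1 \<Longrightarrow> h_coord_neg (\<lambda>\<beta> a. u \<beta> (atan_e a)) \<theta> \<mu> = u (\<theta> + arccos \<mu>) (- arccos \<mu>)"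
  unfolding h_coord_neg_def by (simp add: atan_e_THE_neg)

lemma alpha_rep_eq:
  assumes "- (pi / 2) \<le> \<alpha> - 2 * pi * of_int k" "\<alpha> - 2 * pi * of_int k < 3 * pi / 2"
  shows "alpha_rep \<alpha> = \<alpha> - 2 * pi * of_int k"
proof -
  have "\<lfloor>(\<alpha> + pi / 2) / (2 * pi)\<rfloor> = k"
    using assms pi_gt_zero by (intro floor_unique) (simp_all add: field_simps)
  then show ?thesis unfolding alpha_rep_def by simp
qed

lemma alpha_rep_bounds: "- (pi / 2) \<le> alpha_rep \<alpha>" "alpha_rep \<alpha> < 3 * pi / 2"
proof -
  define k where "k = \<lfloor>(\<alpha> + pi / 2) / (2 * pi)\<rfloor>"
  have "of_int k \<le> (\<alpha> + pi / 2) / (2 * pi)" "(\<alpha> + pi / 2) / (2 * pi) < of_int k + 1"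
    unfolding k_def by linarith+
  then have "2 * pi * of_int k \<le> \<alpha> + pi / 2" "\<alpha> + pi / 2 < 2 * pi * of_int k + 2 * pi"
    using pi_gt_zero by (simp_all add: field_simps)
  then show "- (pi / 2) \<le> alpha_rep \<alpha>" "alpha_rep \<alpha> < 3 * pi / 2"
    unfolding alpha_rep_def k_def[symmetric] by simp_all
qed

lemma alpha_rep_add_int: "alpha_rep (\<alpha> + 2 * pi * of_int m) = alpha_rep \<alpha>"
proof -
  define k where "k = \<lfloor>(\<alpha> + pi / 2) / (2 * pi)\<rfloor>"
  have "alpha_rep \<alpha> = \<alpha> - 2 * pi * of_int k" unfolding alpha_rep_def k_def ..
  moreover have "\<alpha> + 2 * pi * of_int m - 2 * pi * of_int (k + m) = \<alpha> - 2 * pi * of_int k"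
    by (simp add: algebra_simps)
  ultimately show ?thesis
    using alpha_rep_eq[of "\<alpha> + 2 * pi * of_int m" "k + m"] alpha_rep_bounds[of \<alpha>] by simp
qed

lemma A_plus_Iplus: "\<alpha> \<in> Iplus \<Longrightarrow> A_plus u \<beta> \<alpha> = u \<beta> \<alpha>"
  using alpha_rep_eq[of \<alpha> 0] pi_gt_zero unfolding A_plus_def Iplus_def by auto

lemma A_plus_outgoing:
  "pi / 2 < \<alpha> \<Longrightarrow> \<alpha> < 3 * pi / 2 \<Longrightarrow> A_plus u \<beta> \<alpha> = u (\<beta> + pi + 2 * \<alpha>) (pi - \<alpha>)"
  using alpha_rep_eq[of \<alpha> 0] unfolding A_plus_def SE_def by auto

lemma A_plus_outgoing_shifted:
  "- (3 * pi / 2) < \<alpha> \<Longrightarrow> \<alpha> < - (pi / 2) \<Longrightarrow>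
    A_plus u \<beta> \<alpha> = u (\<beta> + pi + 2 * (\<alpha> + 2 * pi)) (pi - (\<alpha> + 2 * pi))"
  using alpha_rep_eq[of \<alpha> "-1"] unfolding A_plus_def SE_def by auto

lemma A_plus_add_int: "A_plus u \<beta> (\<alpha> + 2 * pi * of_int m) = A_plus u \<beta> \<alpha>"
  unfolding A_plus_def alpha_rep_add_int ..

lemma A_plus_periodic:
  assumes "Cinf_plus u"
  shows "A_plus u (\<beta> + 2 * pi) \<alpha> = A_plus u \<beta> \<alpha>"
proof -
  have per: "u (b + 2 * pi) a = u b a" if "a \<in> Iplus" for a b
    using assms that unfolding Cinf_plus_def by blast
  have "u (\<beta> + 2 * pi + pi + 2 * a) (pi - a) = u (\<beta> + pi + 2 * a) (pi - a)"
    if "pi - a \<in> Iplus" for a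
    using per[OF that, of "\<beta> + pi + 2 * a"] by (simp add: algebra_simps)
  with per[of "alpha_rep \<alpha>" \<beta>] alpha_rep_bounds[of \<alpha>] show ?thesis
    unfolding A_plus_def SE_def Iplus_def Let_def by auto
qed

text \<open>\<open>S\<^sup>E\<close> maps the line \<open>\<beta> + \<alpha> = \<theta>\<close> to itself up to \<open>2\<pi>\<close>-shifts, reflecting it across
  both seams \<open>\<alpha> = \<plusminus>\<pi>/2\<close>.\<close>

lemma A_plus_even_about_seams:
  assumes u: "Cinf_plus u" and t: "\<bar>t\<bar> < pi / 2"
  shows "A_plus u (\<theta> - t) (pi / 2 + t) = A_plus u (\<theta> + t) (pi / 2 - t)"
    and "A_plus u (\<theta> - t) (- (pi / 2) + t) = A_plus u (\<theta> + t) (- (pi / 2) - t)"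
proof -
  have per: "u (b + 2 * pi) a = u b a" if "a \<in> Iplus" for a b
    using u that unfolding Cinf_plus_def by blast
  have even: "A_plus u (\<theta> - t) (pi / 2 + t) = A_plus u (\<theta> + t) (pi / 2 - t)
      \<and> A_plus u (\<theta> - t) (- (pi / 2) + t) = A_plus u (\<theta> + t) (- (pi / 2) - t)"
    if t: "0 < t" "t < pi / 2" for t \<theta>
  proof
    have "A_plus u (\<theta> - t) (pi / 2 + t) = u (\<theta> + t + 2 * pi) (pi / 2 - t)"
      using t by (subst A_plus_outgoing) (auto simp: algebra_simps)
    also have "\<dots> = A_plus u (\<theta> + t) (pi / 2 - t)"
      using t per[of "pi / 2 - t"] by (simp add: A_plus_Iplus Iplus_def)
    finally show "A_plus u (\<theta> - t) (pi / 2 + t) = A_plus u (\<theta> + t) (pi / 2 - t)" .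
    have "A_plus u (\<theta> + t) (- (pi / 2) - t) = u (\<theta> - t + 2 * pi + 2 * pi) (- (pi / 2) + t)"
      using t by (subst A_plus_outgoing_shifted) (auto simp: algebra_simps)
    also have "\<dots> = A_plus u (\<theta> - t) (- (pi / 2) + t)"
      using t per[of "- (pi / 2) + t" "\<theta> - t"] per[of "- (pi / 2) + t" "\<theta> - t + 2 * pi"]
      by (simp add: A_plus_Iplus Iplus_def)
    finally show "A_plus u (\<theta> - t) (- (pi / 2) + t) = A_plus u (\<theta> + t) (- (pi / 2) - t)" by simp
  qed
  consider "t = 0" | "0 < t" | "0 < - t" by linarith
  then have "A_plus u (\<theta> - t) (pi / 2 + t) = A_plus u (\<theta> + t) (pi / 2 - t)
      \<and> A_plus u (\<theta> - t) (- (pi / 2) + t) = A_plus u (\<theta> + t) (- (pi / 2) - t)"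
  proof cases
    case 2
    with t show ?thesis using even[of t \<theta>] by simp
  next
    case 3
    with t show ?thesis using even[of "- t" \<theta>] by (simp add: abs_less_iff)
  qed simp
  then show "A_plus u (\<theta> - t) (pi / 2 + t) = A_plus u (\<theta> + t) (pi / 2 - t)"
    "A_plus u (\<theta> - t) (- (pi / 2) + t) = A_plus u (\<theta> + t) (- (pi / 2) - t)" by blast+
qed

lemma h_coord_eq_antidiag_path:
  assumes uF: "\<And>\<beta> \<alpha>. \<alpha> \<in> Iplus \<Longrightarrow> F (\<beta>, \<alpha>) = u \<beta> \<alpha>" and \<mu>: "0 < \<mu>" "\<mu> < 1"
  shows "h_coord_pos (\<lambda>\<beta> a. u \<beta> (atan_e a)) \<theta> \<mu>
      = F (\<theta> - pi / 2 - (-1) * arcsin \<mu>, pi / 2 + (-1) * arcsin \<mu>)"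
    and "h_coord_neg (\<lambda>\<beta> a. u \<beta> (atan_e a)) \<theta> \<mu>
      = F (\<theta> + pi / 2 - 1 * arcsin \<mu>, - (pi / 2) + 1 * arcsin \<mu>)"
proof -
  have arccos: "arccos \<mu> = pi / 2 - arcsin \<mu>" using \<mu> by (simp add: arccos_arcsin_eq)
  have "arccos \<mu> \<in> Iplus" "- arccos \<mu> \<in> Iplus"
    using arccos_lt_bounded[of \<mu>] arccos_less_arccos[of 0 \<mu>] \<mu> by (auto simp: Iplus_def)
  then show "h_coord_pos (\<lambda>\<beta> a. u \<beta> (atan_e a)) \<theta> \<mu>
      = F (\<theta> - pi / 2 - (-1) * arcsin \<mu>, pi / 2 + (-1) * arcsin \<mu>)"
    and "h_coord_neg (\<lambda>\<beta> a. u \<beta> (atan_e a)) \<theta> \<mu>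
      = F (\<theta> + pi / 2 - 1 * arcsin \<mu>, - (pi / 2) + 1 * arcsin \<mu>)"
    by (simp_all add: h_coord_pos_eq[OF \<mu>] h_coord_neg_eq[OF \<mu>] uF arccos diff_diff_eq2 diff_add_eq
        add_diff_eq)
qed

text \<open>The direction factors \<open>-1\<close> and \<open>1\<close> are kept so that the paths have the shape required by
  \<open>has_even_expansion_antidiag_path\<close>.\<close>

lemma odd_taylor_vanish_iff_antidiag_paths:
  assumes "\<And>\<beta> \<alpha>. \<alpha> \<in> Iplus \<Longrightarrow> F (\<beta>, \<alpha>) = u \<beta> \<alpha>"
  shows "odd_taylor_vanish (h_coord_pos (\<lambda>\<beta> a. u \<beta> (atan_e a))) \<longleftrightarrow>
      (\<forall>\<theta>. has_even_expansion (\<lambda>\<mu>. F (\<theta> - pi / 2 - (-1) * arcsin \<mu>, pi / 2 + (-1) * arcsin \<mu>)))"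
    and "odd_taylor_vanish (h_coord_neg (\<lambda>\<beta> a. u \<beta> (atan_e a))) \<longleftrightarrow>
      (\<forall>\<theta>. has_even_expansion (\<lambda>\<mu>. F (\<theta> + pi / 2 - 1 * arcsin \<mu>, - (pi / 2) + 1 * arcsin \<mu>)))"
  unfolding odd_taylor_vanish_iff
  by (simp_all add: has_even_expansion_cong[OF h_coord_eq_antidiag_path(1)[of F u, OF assms]]
      has_even_expansion_cong[OF h_coord_eq_antidiag_path(2)[of F u, OF assms]])

lemma odd_taylor_vanish_if_A_plus_smooth:
  assumes u: "Cinf_plus u" and F: "smooth2 F" and FA: "\<And>\<beta> \<alpha>. F (\<beta>, \<alpha>) = A_plus u \<beta> \<alpha>"
  shows "odd_taylor_vanish (h_coord_pos (\<lambda>\<beta> a. u \<beta> (atan_e a)))"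
    and "odd_taylor_vanish (h_coord_neg (\<lambda>\<beta> a. u \<beta> (atan_e a)))"
proof -
  have "F (\<beta>, \<alpha>) = u \<beta> \<alpha>" if "\<alpha> \<in> Iplus" for \<beta> \<alpha>
    using that by (simp add: FA A_plus_Iplus)
  note paths = odd_taylor_vanish_iff_antidiag_paths[of F u, OF this]
  have "has_even_expansion (\<lambda>\<mu>. F (\<theta> - pi / 2 - (-1) * arcsin \<mu>, pi / 2 + (-1) * arcsin \<mu>))" for \<theta>
  proof (rule has_even_expansion_antidiag_path[OF F])
    fix t :: real assume "\<bar>t\<bar> < pi / 2"
    then show "F (\<theta> - pi / 2 - (-1) * t, pi / 2 + (-1) * t) = F (\<theta> - pi / 2 + (-1) * t, pi / 2 - (-1) * t)"
      using A_plus_even_about_seams(1)[OF u, of "- t" "\<theta> - pi / 2"] by (simp add: FA)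
  qed
  then show "odd_taylor_vanish (h_coord_pos (\<lambda>\<beta> a. u \<beta> (atan_e a)))"
    using paths(1) by blast
  have "has_even_expansion (\<lambda>\<mu>. F (\<theta> + pi / 2 - 1 * arcsin \<mu>, - (pi / 2) + 1 * arcsin \<mu>))" for \<theta>
  proof (rule has_even_expansion_antidiag_path[OF F])
    fix t :: real assume "\<bar>t\<bar> < pi / 2"
    then show "F (\<theta> + pi / 2 - 1 * t, - (pi / 2) + 1 * t) = F (\<theta> + pi / 2 + 1 * t, - (pi / 2) - 1 * t)"
      using A_plus_even_about_seams(2)[OF u, of t "\<theta> + pi / 2"] by (simp add: FA)
  qed
  then show "odd_taylor_vanish (h_coord_neg (\<lambda>\<beta> a. u \<beta> (atan_e a)))"
    using paths(2) by blast
qed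

lemma odd_antidiag_derivs_zero_at_seams:
  assumes F: "smooth2 F" and uF: "\<And>\<beta> \<alpha>. \<alpha> \<in> Iplus \<Longrightarrow> F (\<beta>, \<alpha>) = u \<beta> \<alpha>"
    and pos: "odd_taylor_vanish (h_coord_pos (\<lambda>\<beta> a. u \<beta> (atan_e a)))"
    and neg: "odd_taylor_vanish (h_coord_neg (\<lambda>\<beta> a. u \<beta> (atan_e a)))"
    and k: "odd k"
  shows "(pd_antidiag ^^ k) F (\<theta>, pi / 2) = 0" and "(pd_antidiag ^^ k) F (\<theta>, - (pi / 2)) = 0"
proof -
  note paths = odd_taylor_vanish_iff_antidiag_paths[of F u, OF uF]
  have "has_even_expansion (\<lambda>\<mu>. F (\<theta> + pi / 2 - pi / 2 - (-1) * arcsin \<mu>, pi / 2 + (-1) * arcsin \<mu>))"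
    using pos paths(1) by blast
  from antidiag_derivs_odd_zero_if_has_even_expansion[OF F _ this k]
  show "(pd_antidiag ^^ k) F (\<theta>, pi / 2) = 0" by simp
  have "has_even_expansion (\<lambda>\<mu>. F (\<theta> - pi / 2 + pi / 2 - 1 * arcsin \<mu>, - (pi / 2) + 1 * arcsin \<mu>))"
    using neg paths(2) by blast
  from antidiag_derivs_odd_zero_if_has_even_expansion[OF F _ this k]
  show "(pd_antidiag ^^ k) F (\<theta>, - (pi / 2)) = 0" by simp
qed

text \<open>Local models of \<open>A_plus u\<close> near the seams \<open>\<alpha> = \<pi>/2\<close> and \<open>\<alpha> = -\<pi>/2\<close>, given a smooth
  extension \<open>F\<close> of \<open>u\<close>.\<close>

definition glue_at_pi_half :: "(real \<times> real \<Rightarrow> complex) \<Rightarrow> real \<times> real \<Rightarrow> complex" where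
  "glue_at_pi_half F y = (if snd y \<le> pi / 2 then F y else F (SE y))"

definition glue_at_minus_pi_half :: "(real \<times> real \<Rightarrow> complex) \<Rightarrow> real \<times> real \<Rightarrow> complex" where
  "glue_at_minus_pi_half F y = (if snd y \<le> - (pi / 2) then F (SE (fst y, snd y + 2 * pi)) else F y)"

lemma smooth2_glue_at_pi_half:
  assumes F: "smooth2 F" and per: "\<And>\<beta> \<alpha>. \<alpha> \<in> Iplus \<Longrightarrow> F (\<beta> + 2 * pi, \<alpha>) = F (\<beta>, \<alpha>)"
    and odd_zero: "\<And>\<theta> k. odd k \<Longrightarrow> (pd_antidiag ^^ k) F (\<theta>, pi / 2) = 0"
  shows "smooth2 (glue_at_pi_half F)"
proof -
  have R: "smooth2 (\<lambda>x. F (SE x))"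
    using smooth2_compose_affine[OF F, of pi 1 2 pi 0 "-1"] by (simp add: SE_def add_ac)
  have "agree_inf_order (pi / 2) F (\<lambda>x. F (SE x))"
  proof (rule agree_inf_order_if_reflection[OF F R open_greaterThanLessThan _ _ odd_zero])
    show "0 \<in> closure {0<..<pi}" by simp
    fix \<theta> t :: real assume "t \<in> {0<..<pi}"
    then have "pi / 2 - t \<in> Iplus" by (simp add: Iplus_def)
    from per[OF this, of "\<theta> + t"]
    show "F (SE (\<theta> - t, pi / 2 + t)) = F (\<theta> + t, pi / 2 - t)"
      by (simp add: SE_def algebra_simps)
  qed
  from smooth2_glue_line[OF this] show ?thesis unfolding glue_at_pi_half_def[abs_def] .
qed

lemma smooth2_glue_at_minus_pi_half:
  assumes F: "smooth2 F" and per: "\<And>\<beta> \<alpha>. \<alpha> \<in> Iplus \<Longrightarrow> F (\<beta> + 2 * pi, \<alpha>) = F (\<beta>, \<alpha>)"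
    and odd_zero: "\<And>\<theta> k. odd k \<Longrightarrow> (pd_antidiag ^^ k) F (\<theta>, - (pi / 2)) = 0"
  shows "smooth2 (glue_at_minus_pi_half F)"
proof -
  have R: "smooth2 (\<lambda>x. F (SE (fst x, snd x + 2 * pi)))"
    using smooth2_compose_affine[OF F, of "5 * pi" 1 2 "- pi" 0 "-1"] by (simp add: SE_def algebra_simps)
  have "agree_inf_order (- (pi / 2)) F (\<lambda>x. F (SE (fst x, snd x + 2 * pi)))"
  proof (rule agree_inf_order_if_reflection[OF F R open_greaterThanLessThan _ _ odd_zero])
    show "0 \<in> closure {- pi<..<0}" by simp
    fix \<theta> t :: real assume "t \<in> {- pi<..<0}"
    then have Iplus: "- (pi / 2) - t \<in> Iplus" by (simp add: Iplus_def)
    have "F (SE (fst (\<theta> - t, - (pi / 2) + t), snd (\<theta> - t, - (pi / 2) + t) + 2 * pi))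
        = F (\<theta> + t + 2 * pi + 2 * pi, - (pi / 2) - t)"
      by (rule arg_cong[where f=F]) (simp add: SE_def prod_eq_iff)
    also have "\<dots> = F (\<theta> + t, - (pi / 2) - t)"
      using per[OF Iplus, of "\<theta> + t + 2 * pi"] per[OF Iplus, of "\<theta> + t"] by (rule trans)
    finally show "F (SE (fst (\<theta> - t, - (pi / 2) + t), snd (\<theta> - t, - (pi / 2) + t) + 2 * pi))
        = F (\<theta> + t, - (pi / 2) - t)" .
  qed
  from smooth2_glue_line[OF agree_inf_order_sym[OF this]] show ?thesis
    unfolding glue_at_minus_pi_half_def[abs_def] .
qed

lemma A_plus_eq_glue_at_pi_half:
  assumes uF: "\<And>\<beta> \<alpha>. \<alpha> \<in> Iplus \<Longrightarrow> F (\<beta>, \<alpha>) = u \<beta> \<alpha>"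
    and \<alpha>: "- (pi / 2) < \<alpha>" "\<alpha> < 3 * pi / 2"
  shows "A_plus u \<beta> \<alpha> = glue_at_pi_half F (\<beta>, \<alpha>)"
proof (cases "\<alpha> \<le> pi / 2")
  case True
  with \<alpha> show ?thesis by (simp add: glue_at_pi_half_def A_plus_Iplus Iplus_def uF)
next
  case False
  with \<alpha> show ?thesis by (simp add: glue_at_pi_half_def A_plus_outgoing SE_def Iplus_def uF)
qed

lemma A_plus_eq_glue_at_minus_pi_half:
  assumes u: "Cinf_plus u" and uF: "\<And>\<beta> \<alpha>. \<alpha> \<in> Iplus \<Longrightarrow> F (\<beta>, \<alpha>) = u \<beta> \<alpha>"
    and \<alpha>: "- (3 * pi / 2) < \<alpha>" "\<alpha> < pi / 2"
  shows "A_plus u \<beta> \<alpha> = glue_at_minus_pi_half F (\<beta>, \<alpha>)"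
proof -
  consider "\<alpha> < - (pi / 2)" | "\<alpha> = - (pi / 2)" | "- (pi / 2) < \<alpha>" by linarith
  then show ?thesis
  proof cases
    case 1
    with \<alpha> show ?thesis
      by (simp add: glue_at_minus_pi_half_def A_plus_outgoing_shifted SE_def Iplus_def uF)
  next
    case 2
    have per: "u (b + 2 * pi) (- (pi / 2)) = u b (- (pi / 2))" for b
      using u unfolding Cinf_plus_def Iplus_def by simp
    have "glue_at_minus_pi_half F (\<beta>, \<alpha>) = u (\<beta> + 2 * pi + 2 * pi) (- (pi / 2))"
      using 2 by (simp add: glue_at_minus_pi_half_def SE_def Iplus_def uF algebra_simps)
    also have "\<dots> = A_plus u \<beta> \<alpha>"
      using 2 per[of "\<beta> + 2 * pi"] per[of \<beta>] by (simp add: A_plus_Iplus Iplus_def)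
    finally show ?thesis ..
  next
    case 3
    with \<alpha> show ?thesis by (simp add: glue_at_minus_pi_half_def A_plus_Iplus Iplus_def uF)
  qed
qed

lemma smooth2_A_plus:
  assumes G1: "smooth2 G1" and G2: "smooth2 G2"
    and eq1: "\<And>\<beta> \<alpha>. - (pi / 2) < \<alpha> \<Longrightarrow> \<alpha> < 3 * pi / 2 \<Longrightarrow> A_plus u \<beta> \<alpha> = G1 (\<beta>, \<alpha>)"
    and eq2: "\<And>\<beta> \<alpha>. - (3 * pi / 2) < \<alpha> \<Longrightarrow> \<alpha> < pi / 2 \<Longrightarrow> A_plus u \<beta> \<alpha> = G2 (\<beta>, \<alpha>)"
  shows "smooth2 (\<lambda>x. A_plus u (fst x) (snd x))"
proof (rule smooth2_if_locally_smooth2)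
  fix x :: "real \<times> real"
  define s where "s = 2 * pi * of_int \<lfloor>(snd x + pi / 2) / (2 * pi)\<rfloor>"
  have rep: "alpha_rep (snd x) = snd x - s"
    unfolding alpha_rep_def s_def ..
  have local: "\<exists>U H. open U \<and> x \<in> U \<and> smooth2 H \<and> (\<forall>y\<in>U. A_plus u (fst y) (snd y) = H y)"
    if G: "smooth2 G" and lr: "l < snd x - s" "snd x - s < r"
      and eq: "\<And>\<beta> \<alpha>. l < \<alpha> \<Longrightarrow> \<alpha> < r \<Longrightarrow> A_plus u \<beta> \<alpha> = G (\<beta>, \<alpha>)" for G l r
  proof (intro exI conjI)
    show "open {y. l < snd y - s \<and> snd y - s < r}"
      by (auto intro!: open_Collect_conj open_Collect_less continuous_intros)
    show "smooth2 (\<lambda>y. G (fst y, snd y - s))"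
      using smooth2_compose_affine[OF G, of 0 1 0 "- s" 0 1] by simp
    show "\<forall>y\<in>{y. l < snd y - s \<and> snd y - s < r}. A_plus u (fst y) (snd y) = G (fst y, snd y - s)"
    proof
      fix y :: "real \<times> real" assume "y \<in> {y. l < snd y - s \<and> snd y - s < r}"
      then have "A_plus u (fst y) (snd y - s) = G (fst y, snd y - s)" by (intro eq) auto
      moreover have "A_plus u (fst y) (snd y - s + s) = A_plus u (fst y) (snd y - s)"
        unfolding s_def by (rule A_plus_add_int)
      ultimately show "A_plus u (fst y) (snd y) = G (fst y, snd y - s)" by simp
    qed
  qed (use lr in auto)
  consider "- (pi / 2) < snd x - s" | "snd x - s = - (pi / 2)"
    using alpha_rep_bounds(1)[of "snd x"] rep by fastforce
  then show "\<exists>U H. open U \<and> x \<in> U \<and> smooth2 H \<and> (\<forall>y\<in>U. A_plus u (fst y) (snd y) = H y)"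
  proof cases
    case 1
    with alpha_rep_bounds(2)[of "snd x"] rep show ?thesis
      by (intro local[where l="- (pi / 2)" and r="3 * pi / 2", OF G1 _ _ eq1]) auto
  next
    case 2
    then show ?thesis
      by (intro local[where l="- (3 * pi / 2)" and r="pi / 2", OF G2 _ _ eq2]) auto
  qed
qed

lemma Cinf_torus_A_plus:
  assumes u: "Cinf_plus u"
    and pos: "odd_taylor_vanish (h_coord_pos (\<lambda>\<beta> a. u \<beta> (atan_e a)))"
    and neg: "odd_taylor_vanish (h_coord_neg (\<lambda>\<beta> a. u \<beta> (atan_e a)))"
  shows "Cinf_torus (A_plus u)"
proof -
  obtain F where F: "smooth2 F" and uF: "\<And>\<beta> \<alpha>. \<alpha> \<in> Iplus \<Longrightarrow> F (\<beta>, \<alpha>) = u \<beta> \<alpha>"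
    using u unfolding Cinf_plus_def by blast
  have per: "F (\<beta> + 2 * pi, \<alpha>) = F (\<beta>, \<alpha>)" if "\<alpha> \<in> Iplus" for \<beta> \<alpha>
    using u that unfolding Cinf_plus_def by (simp add: uF)
  note odd_zero = odd_antidiag_derivs_zero_at_seams[OF F uF pos neg]
  have "smooth2 (\<lambda>x. A_plus u (fst x) (snd x))"
  proof (rule smooth2_A_plus)
    show "smooth2 (glue_at_pi_half F)"
      using smooth2_glue_at_pi_half[OF F per odd_zero(1)] by blast
    show "smooth2 (glue_at_minus_pi_half F)"
      using smooth2_glue_at_minus_pi_half[OF F per odd_zero(2)] by blast
  qed (use A_plus_eq_glue_at_pi_half[of F u, OF uF] A_plus_eq_glue_at_minus_pi_half[of u F, OF u uF] in auto)
  moreover have "A_plus u \<beta> (\<alpha> + 2 * pi) = A_plus u \<beta> \<alpha>" for \<beta> \<alpha>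
    using A_plus_add_int[of u \<beta> \<alpha> 1] by simp
  ultimately show ?thesis
    unfolding Cinf_torus_def using A_plus_periodic[OF u] by fastforce
qed

lemma SAH_invariant_iff_SEA_invariant:
  "(\<forall>\<beta> a. u \<beta> (atan_e a) = case_prod (\<lambda>\<beta> a. u \<beta> (atan_e a)) (SAH (\<beta>, a)))
    \<longleftrightarrow> (\<forall>\<beta> \<alpha>. \<alpha> \<in> Iplus \<longrightarrow> case_prod u (SEA (\<beta>, \<alpha>)) = u \<beta> \<alpha>)"
proof -
  have "case_prod (\<lambda>\<beta> a. u \<beta> (atan_e a)) (SAH (\<beta>, a)) = case_prod u (SEA (\<beta>, atan_e a))" for \<beta> a
    by (simp add: SAH_def SEA_def atan_e_uminus)
  then show ?thesis
    using atan_e_in_Iplus atan_e_surj by metis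
qed

lemma Psi_hf_pullback_iff:
  "(\<forall>\<beta> a. h \<beta> a = case_prod u (Psi_hf (\<beta>, a))) \<longleftrightarrow> h = (\<lambda>\<beta> a. u \<beta> (atan_e a))"
  by (auto simp: Psi_hf_def)

theorem lemma2p1:
  fixes h :: "real \<Rightarrow> ereal \<Rightarrow> complex"
  assumes periodic: "\<forall>\<beta> a. h (\<beta> + 2 * pi) a = h \<beta> a"
  shows "Cinf_alpha_plus_GH h \<longleftrightarrow>
           (Cinf_GH h
            \<and> (\<forall>\<beta> a. h \<beta> a = case_prod h (SAH (\<beta>, a)))
            \<and> odd_taylor_vanish (h_coord_pos h)
            \<and> odd_taylor_vanish (h_coord_neg h))"
proof -
  show ?thesis
  proof
    assume "Cinf_alpha_plus_GH h"
    then obtain u where "Cinf_plus u" "Cinf_torus (A_plus u)"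
      "\<forall>\<beta> \<alpha>. \<alpha> \<in> Iplus \<longrightarrow> case_prod u (SEA (\<beta>, \<alpha>)) = u \<beta> \<alpha>" "h = (\<lambda>\<beta> a. u \<beta> (atan_e a))"
      unfolding Cinf_alpha_plus_GH_def Cinf_alpha_plus_def Cinf_alpha_def Psi_hf_pullback_iff by blast
    then show "Cinf_GH h \<and> (\<forall>\<beta> a. h \<beta> a = case_prod h (SAH (\<beta>, a)))
        \<and> odd_taylor_vanish (h_coord_pos h) \<and> odd_taylor_vanish (h_coord_neg h)"
      unfolding Cinf_GH_def Psi_hf_pullback_iff Cinf_torus_def
      using SAH_invariant_iff_SEA_invariant odd_taylor_vanish_if_A_plus_smooth by blast
  next
    assume "Cinf_GH h \<and> (\<forall>\<beta> a. h \<beta> a = case_prod h (SAH (\<beta>, a)))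
        \<and> odd_taylor_vanish (h_coord_pos h) \<and> odd_taylor_vanish (h_coord_neg h)"
    then obtain u where "Cinf_plus u" "h = (\<lambda>\<beta> a. u \<beta> (atan_e a))"
      "\<forall>\<beta> a. h \<beta> a = case_prod h (SAH (\<beta>, a))"
      "odd_taylor_vanish (h_coord_pos h)" "odd_taylor_vanish (h_coord_neg h)"
      unfolding Cinf_GH_def Psi_hf_pullback_iff by blast
    then show "Cinf_alpha_plus_GH h"
      unfolding Cinf_alpha_plus_GH_def Cinf_alpha_plus_def Cinf_alpha_def Psi_hf_pullback_iff
      using SAH_invariant_iff_SEA_invariant Cinf_torus_A_plus by blast
  qed
qed

end
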